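(* Let $Q$ be an induced path in a graph $G$ and let $H$ be a Tutte bridge of $V(Q)$ in $G$ such that (1) $V(H)\cap V(Q)=\{v_1,v_2\}$ for two non-adjacent vertices $v_1,v_2$ of $Q$, and (2) $H$ contains a cycle $C$ and two vertex-disjoint (possibly single-vertex) paths in $H$, one from $v_1$ to $V(C)$ and one from $v_2$ to $V(C)$. Let $Q'$ be the subpath of $Q$ from $v_1$ to $v_2$. Then $G[V(H)\cup V(Q')]$ contains an induced subdivision of the diamond.
   Context: All graphs are finite and simple. The diamond is $K_4$ minus one edge. An induced subdivision of a graph $H$ in $G$ is an induced subgraph of $G$ isomorphic to a graph obtained from $H$ by repeatedly replacing edges by paths of length $2$ through new vertices. For $A\subseteq V(G)$, a Tutte bridge of $A$ in $G$ is the subgraph of $G$ consisting of one connected component $K$ of $G-A$, together with all edges joining $K$ to $A$ and all vertices of $A$ incident with those edges. *)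

theory Defs
  imports Main
begin

definition sgraph :: "'a set \<Rightarrow> ('a \<Rightarrow> 'a \<Rightarrow> bool) \<Rightarrow> bool" where
  "sgraph V E \<longleftrightarrow> finite V \<and> (\<forall>x y. E x y \<longrightarrow> x \<in> V \<and> y \<in> V \<and> x \<noteq> y \<and> E y x)"

definition is_path :: "('a \<Rightarrow> 'a \<Rightarrow> bool) \<Rightarrow> 'a list \<Rightarrow> bool" where
  "is_path E xs \<longleftrightarrow> xs \<noteq> [] \<and> distinct xs \<and>
     (\<forall>i. Suc i < length xs \<longrightarrow> E (xs ! i) (xs ! Suc i))"

definition induced_path :: "('a \<Rightarrow> 'a \<Rightarrow> bool) \<Rightarrow> 'a list \<Rightarrow> bool" where
  "induced_path E xs \<longleftrightarrow> is_path E xs \<and>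
     (\<forall>i j. i < length xs \<longrightarrow> j < length xs \<longrightarrow> E (xs ! i) (xs ! j) \<longrightarrow> i = Suc j \<or> j = Suc i)"

definition is_cycle :: "('a \<Rightarrow> 'a \<Rightarrow> bool) \<Rightarrow> 'a list \<Rightarrow> bool" where
  "is_cycle E cs \<longleftrightarrow> 3 \<le> length cs \<and> distinct cs \<and>
     (\<forall>i. Suc i < length cs \<longrightarrow> E (cs ! i) (cs ! Suc i)) \<and> E (last cs) (hd cs)"

definition induced_adj :: "('a \<Rightarrow> 'a \<Rightarrow> bool) \<Rightarrow> 'a set \<Rightarrow> 'a \<Rightarrow> 'a \<Rightarrow> bool" where
  "induced_adj E S x y \<longleftrightarrow> E x y \<and> x \<in> S \<and> y \<in> S"

definition component :: "'a set \<Rightarrow> ('a \<Rightarrow> 'a \<Rightarrow> bool) \<Rightarrow> 'a set \<Rightarrow> bool" where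
  "component V E K \<longleftrightarrow> K \<noteq> {} \<and> K \<subseteq> V \<and>
     (\<forall>x\<in>K. \<forall>y\<in>K. (induced_adj E K)\<^sup>*\<^sup>* x y) \<and>
     (\<forall>x\<in>K. \<forall>y\<in>V. E x y \<longrightarrow> y \<in> K)"

definition tutte_bridge :: "'a set \<Rightarrow> ('a \<Rightarrow> 'a \<Rightarrow> bool) \<Rightarrow> 'a set \<Rightarrow> 'a set \<Rightarrow> ('a \<Rightarrow> 'a \<Rightarrow> bool) \<Rightarrow> bool" where
  "tutte_bridge V E A VH EH \<longleftrightarrow> (\<exists>K. component (V - A) (induced_adj E (V - A)) K \<and>
     VH = K \<union> {a \<in> A. \<exists>k\<in>K. E a k} \<and>
     EH = (\<lambda>x y. E x y \<and> (x \<in> K \<or> y \<in> K)))"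

inductive subdivision_of :: "nat set \<times> (nat \<Rightarrow> nat \<Rightarrow> bool) \<Rightarrow> nat set \<times> (nat \<Rightarrow> nat \<Rightarrow> bool) \<Rightarrow> bool"
  for H0 where
  sub_refl: "subdivision_of H0 H0"
| sub_step: "subdivision_of H0 (V, E) \<Longrightarrow> E x y \<Longrightarrow> z \<notin> V \<Longrightarrow>
     subdivision_of H0 (insert z V,
       (\<lambda>a b. (E a b \<and> {a, b} \<noteq> {x, y}) \<or> {a, b} = {x, z} \<or> {a, b} = {z, y}))"

definition diamond :: "nat set \<times> (nat \<Rightarrow> nat \<Rightarrow> bool)" where
  "diamond = ({0, 1, 2, 3},
     (\<lambda>a b. a \<in> {0, 1, 2, 3} \<and> b \<in> {0, 1, 2, 3} \<and> a \<noteq> b \<and> {a, b} \<noteq> {2, 3}))"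

definition has_induced_subdiv_diamond :: "('a \<Rightarrow> 'a \<Rightarrow> bool) \<Rightarrow> 'a set \<Rightarrow> bool" where
  "has_induced_subdiv_diamond E S \<longleftrightarrow> (\<exists>W V' E' f. W \<subseteq> S \<and>
     subdivision_of diamond (V', E') \<and> bij_betw f W V' \<and>
     (\<forall>x\<in>W. \<forall>y\<in>W. E x y \<longleftrightarrow> E' (f x) (f y)))"

end

theory Submission
  imports Defs
begin

text \<open>Let R be the subpath Q' and r its second vertex; as v1 and v2 are non-adjacent, r is an
interior vertex of R. It lies outside the bridge, so in G[V(H) \<union> V(Q')] its only neighbours are
its two neighbours on Q. Joining R to the cycle C through the legs P1 and P2 gives a theta: three
internally disjoint paths between the ends a, b of the legs, the first one through r, the other two
the arcs of C.

Such a theta contains an induced subdivision of the diamond, by induction on its total length.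
Without chords it is itself a subdivided diamond, since at most one of its paths is a single edge.
No chord meets r, because r has degree two; any other chord either shortcuts a path or combines
with pieces of the paths into a shorter theta of the same kind, except in two smallest
configurations, where it spans four vertices inducing a diamond.\<close>

fun walk :: "('a \<Rightarrow> 'a \<Rightarrow> bool) \<Rightarrow> 'a list \<Rightarrow> bool" where
  "walk E [] = True"
| "walk E [x] = True"
| "walk E (x # y # xs) = (E x y \<and> walk E (y # xs))"

lemma walk_Cons: "walk E (x # xs) \<longleftrightarrow> (xs = [] \<or> (E x (hd xs) \<and> walk E xs))"
  by (cases xs) auto

lemma walk_append[simp]:
  "walk E (xs @ ys) \<longleftrightarrow> walk E xs \<and> walk E ys \<and> (xs \<noteq> [] \<longrightarrow> ys \<noteq> [] \<longrightarrow> E (last xs) (hd ys))"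
  by (induction xs) (auto simp: walk_Cons)

lemma walk_rev:
  assumes "\<And>x y. E x y \<Longrightarrow> E y x"
  shows "walk E (rev xs) = walk E xs"
  by (induction xs) (auto simp: walk_Cons last_rev intro: assms)

lemma walk_nth: "walk E xs \<longleftrightarrow> (\<forall>i. Suc i < length xs \<longrightarrow> E (xs ! i) (xs ! Suc i))"
proof (induction xs)
  case Nil then show ?case by simp
next
  case (Cons x xs)
  show ?case
  proof (cases xs)
    case Nil then show ?thesis by simp
  next
    case (Cons y ys)
    show ?thesis using Cons.IH unfolding Cons
      by (auto simp: nth_Cons split: nat.splits)
  qed
qed

lemma is_path_iff: "is_path E xs \<longleftrightarrow> xs \<noteq> [] \<and> distinct xs \<and> walk E xs"
  unfolding is_path_def walk_nth by auto

fun consecutive :: "'a list \<Rightarrow> 'a \<Rightarrow> 'a \<Rightarrow> bool" where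
  "consecutive [] u v = False"
| "consecutive [x] u v = False"
| "consecutive (x # y # xs) u v = ((u = x \<and> v = y) \<or> (u = y \<and> v = x) \<or> consecutive (y # xs) u v)"

lemma consecutive_Cons: "consecutive (x # xs) u v \<longleftrightarrow> (xs \<noteq> [] \<and> ((u = x \<and> v = hd xs) \<or> (u = hd xs \<and> v = x))) \<or> consecutive xs u v"
  by (cases xs) auto

lemma consecutive_append[simp]:
  "consecutive (xs @ ys) u v \<longleftrightarrow> consecutive xs u v \<or> consecutive ys u v \<or> (xs \<noteq> [] \<and> ys \<noteq> [] \<and> ((u = last xs \<and> v = hd ys) \<or> (u = hd ys \<and> v = last xs)))"
  by (induction xs) (auto simp: consecutive_Cons)

lemma consecutive_sym: "consecutive xs u v = consecutive xs v u"
  by (induction xs) (auto simp: consecutive_Cons)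

lemma consecutive_rev[simp]: "consecutive (rev xs) u v = consecutive xs u v"
  by (induction xs) (auto simp: consecutive_Cons hd_rev last_rev)

lemma consecutive_set: "consecutive xs u v \<Longrightarrow> u \<in> set xs \<and> v \<in> set xs"
  by (induction xs) (auto simp: consecutive_Cons)

lemma walk_consecutive: "walk E xs \<Longrightarrow> consecutive xs u v \<Longrightarrow> E u v \<or> E v u"
  by (induction xs) (auto simp: consecutive_Cons walk_Cons)

definition concat_path :: "'a list \<Rightarrow> 'a list \<Rightarrow> 'a list" where "concat_path xs ys = xs @ tl ys"

lemma concat_path_simps:
  assumes "xs \<noteq> []" "ys \<noteq> []" "last xs = hd ys"
  shows "set (concat_path xs ys) = set xs \<union> set ys" "length (concat_path xs ys) = length xs + length ys - 1"
    "hd (concat_path xs ys) = hd xs" "last (concat_path xs ys) = last ys" "concat_path xs ys \<noteq> []"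
  using assms unfolding concat_path_def by (cases ys; auto)+

lemma concat_path_distinct:
  assumes "xs \<noteq> []" "ys \<noteq> []" "last xs = hd ys" "distinct xs" "distinct ys" "set xs \<inter> set ys \<subseteq> {hd ys}"
  shows "distinct (concat_path xs ys)"
  using assms unfolding concat_path_def by (cases ys) auto

lemma concat_path_walk:
  assumes "xs \<noteq> []" "ys \<noteq> []" "last xs = hd ys" "walk E xs" "walk E ys"
  shows "walk E (concat_path xs ys)"
  using assms unfolding concat_path_def by (cases ys) (auto simp: walk_Cons)

lemma walk_split: "walk E (ps @ x # ss) \<longleftrightarrow> walk E (ps @ [x]) \<and> walk E (x # ss)"
  by (induction ps) (auto simp: walk_Cons hd_append)

lemma walk_split3: "walk E (ps @ x # ms @ y # ss) \<longleftrightarrow> walk E (ps @ [x]) \<and> walk E (x # ms @ [y]) \<and> walk E (y # ss)"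
  using walk_split[of E ps x "ms @ y # ss"] walk_split[of E "x # ms" y ss] by simp

lemma walk_mono: "(\<And>x y. F x y \<Longrightarrow> G x y) \<Longrightarrow> walk F P \<Longrightarrow> walk G P"
  by (induction P) (auto simp: walk_Cons)

lemma walk_set: "(\<And>x y. F x y \<Longrightarrow> x \<in> X \<and> y \<in> X) \<Longrightarrow> walk F P \<Longrightarrow> P \<noteq> [] \<Longrightarrow> hd P \<in> X \<Longrightarrow> set P \<subseteq> X"
proof (induction P)
  case Nil then show ?case by simp
next
  case (Cons x xs)
  show ?case
  proof (cases xs)
    case Nil then show ?thesis using Cons by simp
  next
    case (Cons y ys)
    have "F x y" "walk F xs" using Cons.prems(2) \<open>xs = y # ys\<close> by auto
    then have "hd xs \<in> X" using Cons.prems(1) \<open>xs = y # ys\<close> by auto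
    then have "set xs \<subseteq> X" using Cons.IH Cons.prems \<open>walk F xs\<close> \<open>xs = y # ys\<close> by auto
    then show ?thesis using Cons.prems by auto
  qed
qed

lemma nonconsecutive_split:
  assumes "distinct L" "u \<in> set L" "v \<in> set L" "u \<noteq> v" "\<not> consecutive L u v"
  shows "\<exists>ps ms ss. ms \<noteq> [] \<and> (L = ps @ u # ms @ v # ss \<or> L = ps @ v # ms @ u # ss)"
proof -
  obtain ps ss where L: "L = ps @ u # ss" using assms(2) by (meson split_list)
  have "v \<in> set ps \<or> v \<in> set ss" using assms(3,4) L by auto
  then show ?thesis
  proof
    assume "v \<in> set ps"
    then obtain ps' ms where ps: "ps = ps' @ v # ms" by (meson split_list)
    have "ms \<noteq> []"
    proof
      assume "ms = []"
      then have "consecutive L u v" unfolding L ps by (simp add: consecutive_Cons)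
      then show False using assms(5) by simp
    qed
    then show ?thesis using L ps by auto
  next
    assume "v \<in> set ss"
    then obtain ms ss' where ss: "ss = ms @ v # ss'" by (meson split_list)
    have "ms \<noteq> []"
    proof
      assume "ms = []"
      then have "consecutive L u v" unfolding L ss by (simp add: consecutive_Cons)
      then show False using assms(5) by simp
    qed
    then show ?thesis using L ss by auto
  qed
qed

definition path_in :: "('a \<Rightarrow> 'a \<Rightarrow> bool) \<Rightarrow> 'a set \<Rightarrow> 'a \<Rightarrow> 'a \<Rightarrow> 'a list \<Rightarrow> bool" where
  "path_in E S a b L \<longleftrightarrow> L \<noteq> [] \<and> distinct L \<and> walk E L \<and> hd L = a \<and> last L = b \<and> set L \<subseteq> S"

lemma path_inD:
  assumes "path_in E S a b L"
  shows "L \<noteq> []" "distinct L" "walk E L" "hd L = a" "last L = b" "set L \<subseteq> S"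
  using assms unfolding path_in_def by auto

lemma path_in_concat:
  assumes "path_in E S a m X" "path_in E S m b Y" "set X \<inter> set Y \<subseteq> {m}"
  shows "path_in E S a b (concat_path X Y)" "set (concat_path X Y) = set X \<union> set Y"
    "length (concat_path X Y) = length X + length Y - 1"
proof -
  have p: "X \<noteq> []" "Y \<noteq> []" "last X = hd Y" using assms(1,2) unfolding path_in_def by auto
  show "set (concat_path X Y) = set X \<union> set Y" "length (concat_path X Y) = length X + length Y - 1"
    using concat_path_simps[OF p] by auto
  show "path_in E S a b (concat_path X Y)"
    unfolding path_in_def using concat_path_simps[OF p] concat_path_walk[OF p] concat_path_distinct[OF p] assms p
    unfolding path_in_def by auto
qed

lemma path_in_split:
  assumes "path_in E S a b (ps @ x # ss)"
  shows "path_in E S a x (ps @ [x])" "path_in E S x b (x # ss)"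
  using assms unfolding path_in_def by (auto simp: walk_split hd_append split: if_splits)

lemma path_in_length: "path_in E S a b L \<Longrightarrow> a \<noteq> b \<Longrightarrow> 2 \<le> length L"
  unfolding path_in_def by (cases L; cases "tl L"; auto)

lemma path_in_length2: "path_in E S a b L \<Longrightarrow> length L = 2 \<Longrightarrow> L = [a, b]"
  unfolding path_in_def by (cases L; cases "tl L"; auto)

lemma path_in_edge: "E x y \<Longrightarrow> x \<noteq> y \<Longrightarrow> x \<in> S \<Longrightarrow> y \<in> S \<Longrightarrow> path_in E S x y [x, y]"
  unfolding path_in_def by auto

lemma path_in_ends: "path_in E S a b L \<Longrightarrow> a \<in> set L \<and> b \<in> set L"
  unfolding path_in_def by (cases L) (auto simp: last_in_set)

lemma Int_doubleton_mono_right: "A \<inter> B = {a, b} \<Longrightarrow> B' \<subseteq> B \<Longrightarrow> a \<in> B' \<Longrightarrow> b \<in> B' \<Longrightarrow> A \<inter> B' = {a, b}"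
  by blast
lemma Int_doubleton_mono_left: "B \<inter> A = {a, b} \<Longrightarrow> B' \<subseteq> B \<Longrightarrow> a \<in> B' \<Longrightarrow> b \<in> B' \<Longrightarrow> B' \<inter> A = {a, b}"
  by blast

lemma path_in_shortcut:
  assumes p: "path_in E S a b (ps @ x # ms @ y # ss)" and e: "E x y"
  shows "path_in E S a b (ps @ x # y # ss)"
proof -
  have "walk E (ps @ x # ms @ y # ss)" using path_inD[OF p] by simp
  then have "walk E (ps @ [x]) \<and> walk E (x # ms @ [y]) \<and> walk E (y # ss)" by (simp only: walk_split3)
  then have "walk E (ps @ x # [] @ y # ss)" using e by (simp only: walk_split3) simp
  then have "walk E (ps @ x # y # ss)" by simp
  moreover have "distinct (ps @ x # y # ss)" "set (ps @ x # y # ss) \<subseteq> S" using path_inD[OF p] by auto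
  moreover have "hd (ps @ x # y # ss) = a" "last (ps @ x # y # ss) = b" using path_inD[OF p] by (auto simp: hd_append)
  ultimately show ?thesis unfolding path_in_def by simp
qed

lemma path_in_infix:
  assumes p: "path_in E S a b (ps @ x # ms @ y # ss)"
  shows "path_in E S x y (x # ms @ [y])"
proof -
  have "walk E (ps @ x # ms @ y # ss)" using path_inD[OF p] by simp
  then have "walk E (x # ms @ [y])" by (simp only: walk_split3)
  moreover have "distinct (x # ms @ [y])" "set (x # ms @ [y]) \<subseteq> S" using path_inD[OF p] by auto
  ultimately show ?thesis unfolding path_in_def by simp
qed

lemma path_in_rev:
  assumes "\<And>x y. E x y \<Longrightarrow> E y x" "path_in E S a b L"
  shows "path_in E S b a (rev L)"
  using assms walk_rev[of E L] unfolding path_in_def by (auto simp: hd_rev last_rev)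

lemma path_in_mono: "S \<subseteq> S' \<Longrightarrow> path_in E S a b L \<Longrightarrow> path_in E S' a b L"
  unfolding path_in_def by blast

lemma path_in_Cons: "path_in E S a b L \<Longrightarrow> E x a \<Longrightarrow> x \<notin> set L \<Longrightarrow> x \<in> S \<Longrightarrow> path_in E S x b (x # L)"
  unfolding path_in_def by (cases L) auto

lemma path_in_decomp: "path_in E S a b L \<Longrightarrow> a \<noteq> b \<Longrightarrow> \<exists>ms. L = a # ms @ [b]"
  unfolding path_in_def
  by (cases L rule: rev_cases; cases "butlast L"; auto)

lemma path_in_split_interior:
  assumes "path_in E S a b L" "x \<in> set L" "x \<noteq> a" "x \<noteq> b"
  obtains ps ss where "L = ps @ x # ss" "ps \<noteq> []" "ss \<noteq> []" "hd ps = a" "last ss = b"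
proof -
  obtain ps ss where L: "L = ps @ x # ss" using assms(2) by (meson split_list)
  have "ps \<noteq> []" using assms(1,3) L unfolding path_in_def by auto
  moreover have "ss \<noteq> []" using assms(1,4) L unfolding path_in_def by auto
  moreover have "hd ps = a" using assms(1) L \<open>ps \<noteq> []\<close> unfolding path_in_def by simp
  moreover have "last ss = b" using assms(1) L \<open>ss \<noteq> []\<close> unfolding path_in_def by simp
  ultimately show ?thesis using that L by blast
qed

lemma path_in_last_in_suffix: "path_in E S a b (ps @ x # ss) \<Longrightarrow> ss \<noteq> [] \<Longrightarrow> b \<in> set ss"
  unfolding path_in_def by auto

lemma path_in_hd_in_prefix: "path_in E S a b (ps @ x # ss) \<Longrightarrow> ps \<noteq> [] \<Longrightarrow> a \<in> set ps"
  unfolding path_in_def by auto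

lemma short_list_hd: "xs \<noteq> [] \<Longrightarrow> length xs < 2 \<Longrightarrow> xs = [hd xs]"
  by (cases xs) auto

lemma short_list_last: "xs \<noteq> [] \<Longrightarrow> length xs < 2 \<Longrightarrow> xs = [last xs]"
  by (cases xs) auto

definition closed_walk :: "('a \<Rightarrow> 'a \<Rightarrow> bool) \<Rightarrow> 'a list \<Rightarrow> bool" where
  "closed_walk E C \<longleftrightarrow> C \<noteq> [] \<and> walk E C \<and> E (last C) (hd C)"

lemma closed_walk_rotate:
  assumes "closed_walk E (c1 @ a # t)"
  shows "closed_walk E (a # t @ c1)"
proof (cases "c1 = []")
  case True then show ?thesis using assms by simp
next
  case False
  have w: "walk E c1" "walk E (a # t)" "E (last c1) a" using assms False unfolding closed_walk_def by auto
  have cl: "E (last (a # t)) (hd c1)" using assms False unfolding closed_walk_def by (simp add: hd_append)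
  have "walk E ((a # t) @ c1)" by (subst walk_append) (use w cl False in auto)
  moreover have "E (last ((a # t) @ c1)) a" using w False by simp
  ultimately show ?thesis unfolding closed_walk_def by simp
qed

lemma closed_walk_arcs:
  assumes sym: "\<And>x y. E x y \<Longrightarrow> E y x"
    and C: "closed_walk E C" "distinct C" and ab: "a \<in> set C" "b \<in> set C" "a \<noteq> b"
  obtains L2 L3 where "path_in E (set C) a b L2" "path_in E (set C) a b L3"
    "set L2 \<inter> set L3 = {a, b}" "length L2 + length L3 = length C + 2"
proof -
  obtain c1 t where C1: "C = c1 @ a # t" using ab(1) by (meson split_list)
  have "b \<in> set (t @ c1)" using ab C1 by auto
  then obtain m s where ts: "t @ c1 = m @ b # s" by (meson split_list)
  have "closed_walk E (a # t @ c1)" "distinct (a # t @ c1)"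
    using closed_walk_rotate[of E c1 a t] C C1 by auto
  then have rot: "closed_walk E (a # m @ b # s)" "distinct (a # m @ b # s)" unfolding ts .
  have setC: "set C = set (a # m @ b # s)" and lenC: "length C = length (a # m @ b # s)"
    using C1 arg_cong[OF ts, of set] arg_cong[OF ts, of length] by auto
  have w: "walk E (a # m @ [b])" "walk E (b # s)"
    using rot(1) walk_split[of E "a # m" b s] unfolding closed_walk_def by auto
  have "E a (last (b # s))" using rot(1) sym unfolding closed_walk_def by simp
  then have "walk E (a # rev (b # s))"
    using w(2) walk_rev[of E "b # s", OF sym] by (cases s rule: rev_cases) (auto simp: walk_Cons)
  then show thesis
    using that[of "a # m @ [b]" "a # rev (b # s)"] w(1) rot(2) unfolding path_in_def setC lenC by auto
qed

definition diamond_subdivision :: "'a set \<Rightarrow> ('a \<Rightarrow> 'a \<Rightarrow> bool) \<Rightarrow> bool" where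
 "diamond_subdivision W F \<longleftrightarrow> (\<exists>V' E' f. subdivision_of diamond (V', E') \<and> bij_betw f W V' \<and>
     (\<forall>x\<in>W. \<forall>y\<in>W. F x y \<longleftrightarrow> E' (f x) (f y)))"

lemma has_induced_subdiv_diamondI:
  assumes "W \<subseteq> S" "diamond_subdivision W F" "\<forall>x\<in>W. \<forall>y\<in>W. F x y \<longleftrightarrow> E x y"
  shows "has_induced_subdiv_diamond E S"
  using assms unfolding diamond_subdivision_def has_induced_subdiv_diamond_def by metis

lemma subdivision_of_closed:
  assumes "subdivision_of H0 G" "finite (fst H0)" "\<forall>a b. snd H0 a b \<longrightarrow> a \<in> fst H0 \<and> b \<in> fst H0"
  shows "finite (fst G) \<and> (\<forall>a b. snd G a b \<longrightarrow> a \<in> fst G \<and> b \<in> fst G)"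
  using assms by (induction rule: subdivision_of.induct) (auto simp: doubleton_eq_iff)

lemma diamond_closed: "finite (fst diamond)" "\<forall>a b. snd diamond a b \<longrightarrow> a \<in> fst diamond \<and> b \<in> fst diamond"
  unfolding diamond_def by auto

lemma diamond_subdivision_subdivide:
  assumes "diamond_subdivision W F" "x \<in> W" "y \<in> W" "F x y" "z \<notin> W"
    and F': "\<forall>u\<in>insert z W. \<forall>v\<in>insert z W. F' u v \<longleftrightarrow>
       ((u \<in> W \<and> v \<in> W \<and> F u v \<and> \<not>((u = x \<and> v = y) \<or> (u = y \<and> v = x)))
        \<or> (u = x \<and> v = z) \<or> (u = z \<and> v = x) \<or> (u = z \<and> v = y) \<or> (u = y \<and> v = z))"
  shows "diamond_subdivision (insert z W) F'"
proof -
  obtain V' E' f where sd: "subdivision_of diamond (V', E')" and bij: "bij_betw f W V'"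
    and iso: "\<forall>x\<in>W. \<forall>y\<in>W. F x y \<longleftrightarrow> E' (f x) (f y)"
    using assms(1) unfolding diamond_subdivision_def by blast
  have pr: "finite V' \<and> (\<forall>a b. E' a b \<longrightarrow> a \<in> V' \<and> b \<in> V')"
    using subdivision_of_closed[OF sd diamond_closed] by simp
  obtain n :: nat where n: "n \<notin> V'"
    using pr by (meson ex_new_if_finite infinite_UNIV_nat)
  have Exy: "E' (f x) (f y)" using iso assms(2-4) by blast
  define E'' where "E'' = (\<lambda>a b. (E' a b \<and> {a, b} \<noteq> {f x, f y}) \<or> {a, b} = {f x, n} \<or> {a, b} = {n, f y})"
  have sd2: "subdivision_of diamond (insert n V', E'')"
    unfolding E''_def by (rule sub_step[OF sd Exy n])
  define g where "g = f(z := n)"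
  have inj: "inj_on f W" and img: "f ` W = V'" using bij by (auto simp: bij_betw_def)
  have bij2: "bij_betw g (insert z W) (insert n V')"
    unfolding bij_betw_def g_def using inj img assms(5) n
    by (auto simp: inj_on_def image_iff split: if_splits)
  have fW: "\<And>u. u \<in> W \<Longrightarrow> f u \<in> V'" using img by auto
  have fxn: "f x \<noteq> n" "f y \<noteq> n" using fW assms(2,3) n by auto
  have "\<forall>u\<in>insert z W. \<forall>v\<in>insert z W. F' u v \<longleftrightarrow> E'' (g u) (g v)"
  proof (intro ballI)
    fix u v assume u: "u \<in> insert z W" and v: "v \<in> insert z W"
    show "F' u v \<longleftrightarrow> E'' (g u) (g v)"
    proof (cases "u = z")
      case True
      then show ?thesis
      proof (cases "v = z")
        case True
        then show ?thesis using \<open>u = z\<close> F' fxn pr n assms(2,3,5) unfolding E''_def g_def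
          by (auto simp: doubleton_eq_iff)
      next
        case False
        then have vW: "v \<in> W" using v by auto
        have "g u = n" "g v = f v" using \<open>u = z\<close> False unfolding g_def by auto
        moreover have "\<not> E' n (f v)" using pr n by auto
        moreover have "(f v = f x) = (v = x)" "(f v = f y) = (v = y)"
          using inj vW assms(2,3) by (auto simp: inj_on_def)
        ultimately show ?thesis using \<open>u = z\<close> F' u v vW fxn assms(5) unfolding E''_def
          by (auto simp: doubleton_eq_iff)
      qed
    next
      case False
      then have uW: "u \<in> W" using u by auto
      show ?thesis
      proof (cases "v = z")
        case True
        have "g v = n" "g u = f u" using \<open>v = z\<close> False unfolding g_def by auto
        moreover have "\<not> E' (f u) n" using pr n by auto
        moreover have "(f u = f x) = (u = x)" "(f u = f y) = (u = y)"
          using inj uW assms(2,3) by (auto simp: inj_on_def)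
        ultimately show ?thesis using \<open>v = z\<close> F' u v uW fxn assms(5) unfolding E''_def
          by (auto simp: doubleton_eq_iff)
      next
        case False
        then have vW: "v \<in> W" using v by auto
        have "g v = f v" "g u = f u" using \<open>v \<noteq> z\<close> \<open>u \<noteq> z\<close> unfolding g_def by auto
        moreover have "(f u = f x) = (u = x)" "(f u = f y) = (u = y)"
          "(f v = f x) = (v = x)" "(f v = f y) = (v = y)"
          using inj uW vW assms(2,3) by (auto simp: inj_on_def)
        moreover have "f u \<noteq> n" "f v \<noteq> n" using fW uW vW n by auto
        moreover have "F u v \<longleftrightarrow> E' (f u) (f v)" using iso uW vW by auto
        ultimately show ?thesis using F' uW vW \<open>u \<noteq> z\<close> \<open>v \<noteq> z\<close> fxn assms(5) unfolding E''_def
          by (auto simp: doubleton_eq_iff)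
      qed
    qed
  qed
  then show ?thesis unfolding diamond_subdivision_def using sd2 bij2 by blast
qed

lemma diamond_subdivision_diamond:
  assumes "distinct [a0, a1, a2, a3]" "W = {a0, a1, a2, a3}"
    and F: "\<forall>u\<in>W. \<forall>v\<in>W. F u v \<longleftrightarrow> (u \<noteq> v \<and> \<not>((u = a2 \<and> v = a3) \<or> (u = a3 \<and> v = a2)))"
  shows "diamond_subdivision W F"
proof -
  define f where "f = (\<lambda>u. if u = a0 then 0 else if u = a1 then 1 else if u = a2 then 2 else (3::nat))"
  have fv: "f a0 = 0" "f a1 = 1" "f a2 = 2" "f a3 = 3" using assms(1) unfolding f_def by auto
  have bij: "bij_betw f W {0, 1, 2, 3}"
  proof -
    have "inj_on f W" unfolding inj_on_def assms(2) using fv assms(1) by auto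
    moreover have "f ` W = {0,1,2,3}" unfolding assms(2) using fv by auto
    ultimately show ?thesis unfolding bij_betw_def by simp
  qed
  have dm: "snd diamond = (\<lambda>a b. a \<in> {0, 1, 2, 3} \<and> b \<in> {0, 1, 2, 3} \<and> a \<noteq> b \<and> {a, b} \<noteq> {2::nat, 3})"
    unfolding diamond_def by simp
  have "\<forall>u\<in>W. \<forall>v\<in>W. F u v \<longleftrightarrow> snd diamond (f u) (f v)"
  proof (intro ballI)
    fix u v assume u: "u \<in> W" and v: "v \<in> W"
    have e: "F u v \<longleftrightarrow> (u \<noteq> v \<and> \<not>((u = a2 \<and> v = a3) \<or> (u = a3 \<and> v = a2)))" using F u v by blast
    from u v show "F u v \<longleftrightarrow> snd diamond (f u) (f v)" unfolding e dm assms(2)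
      using assms(1) fv by (elim insertE emptyE) (auto simp add: doubleton_eq_iff)
  qed
  then show ?thesis unfolding diamond_subdivision_def using bij sub_refl[of diamond]
    unfolding diamond_def by auto
qed

definition theta_graph :: "'a set \<Rightarrow> ('a \<Rightarrow> 'a \<Rightarrow> bool) \<Rightarrow> 'a \<Rightarrow> 'a \<Rightarrow> 'a list \<Rightarrow> 'a list \<Rightarrow> 'a list \<Rightarrow> bool" where
"theta_graph W F a b L1 L2 L3 \<longleftrightarrow> a \<noteq> b \<and>
  distinct L1 \<and> 2 \<le> length L1 \<and> hd L1 = a \<and> last L1 = b \<and>
  distinct L2 \<and> 2 \<le> length L2 \<and> hd L2 = a \<and> last L2 = b \<and>
  distinct L3 \<and> 2 \<le> length L3 \<and> hd L3 = a \<and> last L3 = b \<and>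
  set L1 \<inter> set L2 = {a, b} \<and> set L1 \<inter> set L3 = {a, b} \<and> set L2 \<inter> set L3 = {a, b} \<and>
  \<not>(length L1 = 2 \<and> length L2 = 2) \<and> \<not>(length L1 = 2 \<and> length L3 = 2) \<and> \<not>(length L2 = 2 \<and> length L3 = 2) \<and>
  W = set L1 \<union> set L2 \<union> set L3 \<and>
  (\<forall>u\<in>W. \<forall>v\<in>W. F u v \<longleftrightarrow> consecutive L1 u v \<or> consecutive L2 u v \<or> consecutive L3 u v)"

lemma theta_graph_swap12: "theta_graph W F a b L1 L2 L3 \<Longrightarrow> theta_graph W F a b L2 L1 L3"
  unfolding theta_graph_def by blast
lemma theta_graph_swap13: "theta_graph W F a b L1 L2 L3 \<Longrightarrow> theta_graph W F a b L3 L2 L1"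
  unfolding theta_graph_def by blast

lemma distinct_last_eq_hd: "distinct xs \<Longrightarrow> xs \<noteq> [] \<Longrightarrow> last xs = hd xs \<Longrightarrow> length xs = 1"
  by (cases xs) (auto split: if_splits)

lemma consecutive_hd_last:
  assumes "distinct L" "consecutive L (hd L) (last L)" "hd L \<noteq> last L"
  shows "length L = 2"
proof (cases L)
  case Nil then show ?thesis using assms by simp
next
  case (Cons x xs)
  have "\<not> consecutive xs x (last L)" using assms(1) Cons consecutive_set by fastforce
  then have "xs \<noteq> [] \<and> last xs = hd xs" using assms Cons by (auto simp: consecutive_Cons split: if_splits)
  then show ?thesis using distinct_last_eq_hd[of xs] assms(1) Cons by auto
qed

lemma theta_graph_contract:
  assumes A: "theta_graph W F a b L1 L2 L3" and l3: "3 \<le> length L1"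
    and c: "4 \<le> length L1 \<or> (3 \<le> length L2 \<and> 3 \<le> length L3)"
    and IH: "\<And>W' F' L1'. theta_graph W' F' a b L1' L2 L3 \<Longrightarrow> length L1' < length L1 \<Longrightarrow> diamond_subdivision W' F'"
  shows "diamond_subdivision W F"
proof -
  note d = A[unfolded theta_graph_def]
  have L1e: "L1 = a # hd (tl L1) # tl (tl L1)" using d l3 by (cases L1; cases "tl L1"; auto)
  have rne0: "tl (tl L1) \<noteq> []" using l3 by (cases L1; cases "tl L1"; auto)
  obtain z rest where L1: "L1 = a # z # rest" and rne: "rest \<noteq> []"
    using L1e rne0 by blast
  define y where "y = hd rest"
  define L1' where "L1' = a # rest"
  define W' where "W' = set L1' \<union> set L2 \<union> set L3"
  define F' where "F' = (\<lambda>u v. consecutive L1' u v \<or> consecutive L2 u v \<or> consecutive L3 u v)"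
  have dL: "distinct (a # z # rest)" using d L1 by simp
  have bl: "b = last rest" using d L1 rne by simp
  have brest: "b \<in> set rest" using bl rne by simp
  have ar: "a \<notin> set rest" "z \<noteq> a" "z \<notin> set rest" using dL by auto
  have zb: "z \<noteq> b" using brest ar by auto
  have zL1: "z \<in> set L1" using L1 by simp
  have zn: "z \<notin> set L2" "z \<notin> set L3" "z \<noteq> a" "z \<noteq> b" "z \<notin> set rest"
  proof -
    show "z \<notin> set L2" using zL1 d ar zb by blast
    show "z \<notin> set L3" using zL1 d ar zb by blast
  qed (use ar zb in auto)
  have sL1': "set L1' = set L1 - {z}" unfolding L1'_def L1 using ar by auto
  have A': "theta_graph W' F' a b L1' L2 L3"
    unfolding theta_graph_def
  proof (intro conjI)
    show "distinct L1'" "2 \<le> length L1'" "hd L1' = a" "last L1' = b"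
      unfolding L1'_def using dL rne bl by (auto simp: Suc_le_eq)
    show "set L1' \<inter> set L2 = {a, b}" "set L1' \<inter> set L3 = {a, b}"
      unfolding sL1' using d zn by auto
    show "\<not> (length L1' = 2 \<and> length L2 = 2)" "\<not> (length L1' = 2 \<and> length L3 = 2)"
      using c L1 unfolding L1'_def by auto
    show "W' = set L1' \<union> set L2 \<union> set L3" by (simp add: W'_def)
    show "\<forall>u\<in>W'. \<forall>v\<in>W'. F' u v = (consecutive L1' u v \<or> consecutive L2 u v \<or> consecutive L3 u v)"
      by (simp add: F'_def)
  qed (use d in auto)
  have isW': "diamond_subdivision W' F'" by (rule IH[OF A']) (simp add: L1 L1'_def)
  have WW: "W = insert z W'" "z \<notin> W'" using d zL1 zn sL1' unfolding W'_def by auto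
  have yW: "y \<in> W'" "a \<in> W'" unfolding W'_def L1'_def y_def using rne by auto
  have Fay: "F' a y" unfolding F'_def L1'_def y_def using rne by (simp add: consecutive_Cons)
  have yb: "y = b \<Longrightarrow> rest = [b]" using d L1 rne unfolding y_def
    by (cases rest) (auto simp: last_ConsR split: if_splits)
  have noay: "\<not> consecutive L2 a y" "\<not> consecutive L3 a y"
  proof -
    show "\<not> consecutive L2 a y"
    proof
      assume e: "consecutive L2 a y"
      then have "y \<in> set L2" using consecutive_set by fastforce
      moreover have "y \<in> set L1" using L1 rne unfolding y_def by simp
      moreover have "y \<noteq> a" using ar rne unfolding y_def by auto
      ultimately have "y = b" using d by blast
      then have "length L2 = 2" using consecutive_hd_last[of L2] e d by auto
      moreover have "length L1 = 3" using yb \<open>y = b\<close> L1 by simp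
      ultimately show False using c by simp
    qed
    show "\<not> consecutive L3 a y"
    proof
      assume e: "consecutive L3 a y"
      then have "y \<in> set L3" using consecutive_set by fastforce
      moreover have "y \<in> set L1" using L1 rne unfolding y_def by simp
      moreover have "y \<noteq> a" using ar rne unfolding y_def by auto
      ultimately have "y = b" using d by blast
      then have "length L3 = 2" using consecutive_hd_last[of L3] e d by auto
      moreover have "length L1 = 3" using yb \<open>y = b\<close> L1 by simp
      ultimately show False using c by simp
    qed
  qed
  have "\<forall>u\<in>insert z W'. \<forall>v\<in>insert z W'. F u v \<longleftrightarrow>
       ((u \<in> W' \<and> v \<in> W' \<and> F' u v \<and> \<not>((u = a \<and> v = y) \<or> (u = y \<and> v = a)))
        \<or> (u = a \<and> v = z) \<or> (u = z \<and> v = a) \<or> (u = z \<and> v = y) \<or> (u = y \<and> v = z))"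
  proof (intro ballI)
    fix u v assume u: "u \<in> insert z W'" and v: "v \<in> insert z W'"
    have Fuv: "F u v \<longleftrightarrow> consecutive L1 u v \<or> consecutive L2 u v \<or> consecutive L3 u v" using d u v WW by blast
    have r1: "consecutive rest u v \<Longrightarrow> u \<noteq> a \<and> v \<noteq> a \<and> u \<noteq> z \<and> v \<noteq> z" using ar zn(5) consecutive_set by fastforce
    have r2: "consecutive L2 u v \<Longrightarrow> u \<noteq> z \<and> v \<noteq> z" "consecutive L3 u v \<Longrightarrow> u \<noteq> z \<and> v \<noteq> z"
      using zn consecutive_set by fastforce+
    have r3: "\<not> consecutive L2 y a" "\<not> consecutive L3 y a" using noay consecutive_sym by metis+
    have uvW: "u \<noteq> z \<Longrightarrow> u \<in> W'" "v \<noteq> z \<Longrightarrow> v \<in> W'" using u v by auto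
    show "F u v \<longleftrightarrow>
       ((u \<in> W' \<and> v \<in> W' \<and> F' u v \<and> \<not>((u = a \<and> v = y) \<or> (u = y \<and> v = a)))
        \<or> (u = a \<and> v = z) \<or> (u = z \<and> v = a) \<or> (u = z \<and> v = y) \<or> (u = y \<and> v = z))"
      unfolding Fuv F'_def L1'_def L1 using r1 r2 r3 noay uvW zn yW rne ar
      by (auto simp: consecutive_Cons y_def)
  qed
  then have "diamond_subdivision (insert z W') F"
    by (intro diamond_subdivision_subdivide[OF isW' yW(2) yW(1) Fay WW(2)])
  then show ?thesis using WW by simp
qed

lemma theta_graph_minimal:
  assumes A: "theta_graph W F a b L1 L2 L3" and len: "length L1 = 2" "length L2 \<le> 3" "length L3 \<le> 3"
  shows "diamond_subdivision W F"
proof -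
  note d = A[unfolded theta_graph_def]
  have shape3: "\<exists>c. L = [a, c, b]" if "length L = 3" "hd L = a" "last L = b" for L :: "'a list"
    using that by (cases L; cases "tl L"; cases "tl (tl L)") auto
  have "L1 = [a, b]" using len(1) d by (cases L1; cases "tl L1") auto
  moreover obtain c e where "L2 = [a, c, b]" "L3 = [a, e, b]"
    using shape3[of L2] shape3[of L3] d len by fastforce
  moreover have "distinct [a, b, c, e]" using d calculation by auto
  ultimately show ?thesis
    using d by (intro diamond_subdivision_diamond[of a b c e W F]) (auto elim!: insertE)
qed

lemma theta_graph_diamond_subdivision: "theta_graph W F a b L1 L2 L3 \<Longrightarrow> diamond_subdivision W F"
proof (induction "length L1 + length L2 + length L3" arbitrary: W F L1 L2 L3 rule: less_induct)
  case less
  note d = less.prems[unfolded theta_graph_def]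
  show ?case
  proof (cases "3 \<le> length L1 \<and> (4 \<le> length L1 \<or> (3 \<le> length L2 \<and> 3 \<le> length L3))")
    case True
    have IH: "diamond_subdivision W' F'" if "theta_graph W' F' a b L1' L2 L3" "length L1' < length L1" for W' F' L1'
      using less.hyps[of L1' L2 L3 W' F'] that by simp
    show ?thesis using True by (intro theta_graph_contract[OF less.prems]) (auto intro: IH)
  next
    case n1: False
    show ?thesis
    proof (cases "3 \<le> length L2 \<and> (4 \<le> length L2 \<or> (3 \<le> length L1 \<and> 3 \<le> length L3))")
      case True
      have IH: "diamond_subdivision W' F'" if "theta_graph W' F' a b L2' L1 L3" "length L2' < length L2" for W' F' L2'
        using less.hyps[of L1 L2' L3 W' F'] that theta_graph_swap12 by fastforce
      show ?thesis using True by (intro theta_graph_contract[OF theta_graph_swap12[OF less.prems]]) (auto intro: IH)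
    next
      case n2: False
      show ?thesis
      proof (cases "3 \<le> length L3 \<and> (4 \<le> length L3 \<or> (3 \<le> length L2 \<and> 3 \<le> length L1))")
        case True
        have IH: "diamond_subdivision W' F'" if "theta_graph W' F' a b L3' L2 L1" "length L3' < length L3" for W' F' L3'
          using less.hyps[of L1 L2 L3' W' F'] that theta_graph_swap13 by fastforce
        show ?thesis using True by (intro theta_graph_contract[OF theta_graph_swap13[OF less.prems]]) (auto intro: IH)
      next
        case n3: False
        have "length L1 \<le> 3" "length L2 \<le> 3" "length L3 \<le> 3" using n1 n2 n3 d by auto
        moreover have "length L1 = 2 \<or> length L2 = 2 \<or> length L3 = 2" using n1 n2 n3 d by auto
        ultimately show ?thesis
          using theta_graph_minimal[OF less.prems] theta_graph_minimal[OF theta_graph_swap12[OF less.prems]]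
            theta_graph_minimal[OF theta_graph_swap13[OF less.prems]] by auto
      qed
    qed
  qed
qed

text \<open>Three internally disjoint a-b paths in G[S] with r inside the first one; the bound on the
lengths says that the other two form a cycle.\<close>

definition theta :: "('a \<Rightarrow> 'a \<Rightarrow> bool) \<Rightarrow> 'a set \<Rightarrow> 'a \<Rightarrow> 'a \<Rightarrow> 'a \<Rightarrow> 'a list \<Rightarrow> 'a list \<Rightarrow> 'a list \<Rightarrow> bool" where
 "theta E S r a b L1 L2 L3 \<longleftrightarrow> a \<noteq> b \<and> path_in E S a b L1 \<and> path_in E S a b L2 \<and> path_in E S a b L3 \<and>
   set L1 \<inter> set L2 = {a, b} \<and> set L1 \<inter> set L3 = {a, b} \<and> set L2 \<inter> set L3 = {a, b} \<and>
   5 \<le> length L2 + length L3 \<and> r \<in> set L1 \<and> r \<noteq> a \<and> r \<noteq> b"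

lemma thetaD:
  assumes "theta E S r a b L1 L2 L3"
  shows "a \<noteq> b" "path_in E S a b L1" "path_in E S a b L2" "path_in E S a b L3"
    "set L1 \<inter> set L2 = {a, b}" "set L1 \<inter> set L3 = {a, b}" "set L2 \<inter> set L3 = {a, b}"
    "5 \<le> length L2 + length L3" "r \<in> set L1" "r \<noteq> a" "r \<noteq> b"
  using assms unfolding theta_def by auto

lemma thetaI:
  assumes "a \<noteq> b" "path_in E S a b L1" "path_in E S a b L2" "path_in E S a b L3"
    "set L1 \<inter> set L2 = {a, b}" "set L1 \<inter> set L3 = {a, b}" "set L2 \<inter> set L3 = {a, b}"
    "5 \<le> length L2 + length L3" "r \<in> set L1" "r \<noteq> a" "r \<noteq> b"
  shows "theta E S r a b L1 L2 L3"
  using assms unfolding theta_def by auto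

locale root_of_degree_two =
  fixes E :: "'a \<Rightarrow> 'a \<Rightarrow> bool" and S :: "'a set" and r :: 'a
  assumes sym: "E x y \<Longrightarrow> E y x" and irr: "\<not> E x x"
    and deg: "\<lbrakk>w1 \<in> S; w2 \<in> S; w3 \<in> S; E r w1; E r w2; E r w3\<rbrakk> \<Longrightarrow> w1 = w2 \<or> w1 = w3 \<or> w2 = w3"
begin
definition shorter_theta :: "nat \<Rightarrow> bool" where
 "shorter_theta n \<longleftrightarrow> (\<exists>a b L1 L2 L3. theta E S r a b L1 L2 L3 \<and> length L1 + length L2 + length L3 < n)
     \<or> has_induced_subdiv_diamond E S"

lemma shorter_thetaI: "theta E S r a b L1 L2 L3 \<Longrightarrow> length L1 + length L2 + length L3 < n \<Longrightarrow> shorter_theta n"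
  unfolding shorter_theta_def by blast

lemma theta_swap: "theta E S r a b L1 L2 L3 \<Longrightarrow> theta E S r a b L1 L3 L2"
  unfolding theta_def by (auto simp: add.commute)

lemma theta_rev: "theta E S r a b L1 L2 L3 \<Longrightarrow> theta E S r b a (rev L1) (rev L2) (rev L3)"
  unfolding theta_def using path_in_rev[OF sym] by (auto simp: insert_commute)

lemma root_chord_consecutive:
  assumes T: "theta E S r a b L1 L2 L3" and y: "y \<in> set L1 \<union> set L2 \<union> set L3" and e: "E r y"
  shows "consecutive L1 r y"
proof -
  have rL1: "r \<in> set L1" "r \<noteq> a" "r \<noteq> b" and pL1: "path_in E S a b L1"
    and yS: "y \<in> S"
    using T y unfolding theta_def path_in_def by auto
  obtain ps ss where L1: "L1 = ps @ r # ss" using rL1 by (meson split_list)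
  have p1: "path_in E S a r (ps @ [r])" "path_in E S r b (r # ss)" using path_in_split[of E S a b ps r ss] pL1 L1 by auto
  have pne: "ps \<noteq> []" using p1(1) rL1(2) unfolding path_in_def by auto
  have sne: "ss \<noteq> []" using p1(2) rL1(3) unfolding path_in_def by auto
  define u where "u = last ps"
  define w where "w = hd ss"
  have "walk E (ps @ [r])" using p1 unfolding path_in_def by simp
  then have Eu: "E r u" using pne sym unfolding u_def by simp
  have "walk E (r # ss)" using p1 unfolding path_in_def by simp
  then have Ew: "E r w" using sne unfolding w_def by (simp add: walk_Cons)
  have dL: "distinct (ps @ r # ss)" using pL1 L1 unfolding path_in_def by simp
  have "last ps \<in> set ps" "hd ss \<in> set ss" using pne sne by auto
  then have uw: "u \<noteq> w" using dL unfolding u_def w_def by auto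
  have sL: "set (ps @ r # ss) \<subseteq> S" using pL1 L1 unfolding path_in_def by simp
  have S: "u \<in> S" "w \<in> S" using sL pne sne unfolding u_def w_def by auto
  have "y = u \<or> y = w" using deg[OF S yS Eu Ew e] uw by auto
  moreover have "consecutive L1 r u" unfolding L1 u_def using pne consecutive_sym[of "ps @ r # ss" r "last ps"] by simp
  moreover have "consecutive L1 r w" unfolding L1 w_def using sne by (simp add: consecutive_Cons)
  ultimately show ?thesis by auto
qed

lemma chord_within_arc:
  assumes T: "theta E S r a b L1 L2 L3" and L2: "L2 = ps @ x # ms @ y # ss" and ms: "ms \<noteq> []"
    and e: "E x y" and nl: "\<not> consecutive L3 x y"
  shows "shorter_theta (length L1 + length L2 + length L3)"
proof -
  have p2o: "path_in E S a b L2" and p3: "path_in E S a b L3" and ab: "a \<noteq> b"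
    and l5: "5 \<le> length L2 + length L3" using T unfolding theta_def by auto
  define L2' where "L2' = ps @ x # y # ss"
  have p2: "path_in E S a b L2'"
  proof -
    have "walk E (ps @ x # ms @ y # ss)" using p2o unfolding L2 path_in_def by simp
    then have "walk E (ps @ [x]) \<and> walk E (x # ms @ [y]) \<and> walk E (y # ss)" by (simp only: walk_split3)
    then have "walk E (ps @ x # [] @ y # ss)" using e by (simp only: walk_split3) simp
    then have "walk E L2'" unfolding L2'_def by simp
    moreover have "distinct L2'" "set L2' \<subseteq> S" using p2o unfolding L2 L2'_def path_in_def by auto
    moreover have "hd L2' = a" "last L2' = b" using p2o unfolding L2 L2'_def path_in_def by (auto simp: hd_append)
    ultimately show ?thesis unfolding path_in_def L2'_def by simp
  qed
  have s2: "set L2' \<subseteq> set L2" unfolding L2 L2'_def by auto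
  have ab2: "a \<in> set L2'" "b \<in> set L2'" using path_in_ends[OF p2] by auto
  have len: "length L2' < length L2" unfolding L2 L2'_def using ms by simp
  have g2: "2 \<le> length L2'" "2 \<le> length L3" using path_in_length[OF p2 ab] path_in_length[OF p3 ab] by auto
  have "5 \<le> length L2' + length L3"
  proof (rule ccontr)
    assume nn: "\<not> ?thesis"
    show False
    proof (cases "length L2' = 2")
      case True
      then have "ps = []" "ss = []" unfolding L2'_def by auto
      then have "x = a" "y = b" using p2 unfolding L2'_def path_in_def by auto
      have "length L3 = 2" using True nn g2 by simp
      then have "L3 = [a, b]" by (rule path_in_length2[OF p3])
      then show False using nl \<open>x = a\<close> \<open>y = b\<close> by simp
    next
      case False
      then show False using nn g2 by simp
    qed
  qed
  moreover have i12: "set L1 \<inter> set L2 = {a, b}" "set L2 \<inter> set L3 = {a, b}"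
    using T unfolding theta_def by auto
  moreover have "set L1 \<inter> set L2' = {a, b}" "set L2' \<inter> set L3 = {a, b}"
    using Int_doubleton_mono_right[OF i12(1) s2 ab2] Int_doubleton_mono_left[OF i12(2) s2 ab2] by auto
  ultimately have "theta E S r a b L1 L2' L3" using T p2 unfolding theta_def by simp
  then show ?thesis using len by (intro shorter_thetaI) auto
qed

lemma chord_within_root_path_avoiding:
  assumes T: "theta E S r a b L1 L2 L3" and L1: "L1 = ps @ x # ms @ y # ss" and ms: "ms \<noteq> []"
    and e: "E x y" and rm: "r \<notin> set ms"
  shows "shorter_theta (length L1 + length L2 + length L3)"
proof -
  define L1' where "L1' = ps @ x # y # ss"
  have p1: "path_in E S a b L1'" unfolding L1'_def using path_in_shortcut[OF thetaD(2)[OF T, unfolded L1] e] .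
  have s1: "set L1' \<subseteq> set L1" unfolding L1 L1'_def by auto
  have ab1: "a \<in> set L1'" "b \<in> set L1'" using path_in_ends[OF p1] by auto
  have len: "length L1' < length L1" unfolding L1 L1'_def using ms by simp
  have i: "set L1' \<inter> set L2 = {a, b}" "set L1' \<inter> set L3 = {a, b}"
    using Int_doubleton_mono_left[OF thetaD(5)[OF T] s1 ab1] Int_doubleton_mono_left[OF thetaD(6)[OF T] s1 ab1] by auto
  have rr: "r \<in> set L1'" using thetaD(9)[OF T] rm unfolding L1 L1'_def by auto
  have "theta E S r a b L1' L2 L3"
    by (rule thetaI[OF thetaD(1)[OF T] p1 thetaD(3,4)[OF T] i thetaD(7,8)[OF T] rr thetaD(10,11)[OF T]])
  then show ?thesis using len by (intro shorter_thetaI) auto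
qed

lemma chord_within_root_path_spanning:
  assumes T: "theta E S r a b L1 L2 L3" and L1: "L1 = ps @ x # ms @ y # ss" and ms: "ms \<noteq> []"
    and e: "E x y" and rm: "r \<in> set ms" and nl: "\<not> consecutive L2 x y" and le: "length L2 \<le> length L3"
  shows "shorter_theta (length L1 + length L2 + length L3)"
proof -
  have p1: "path_in E S a b (ps @ x # ms @ y # ss)" using thetaD(2)[OF T] L1 by simp
  have p2: "path_in E S a b L2" using thetaD(3)[OF T] .
  have ab: "a \<noteq> b" using thetaD(1)[OF T] .
  have d1: "distinct (ps @ x # ms @ y # ss)" using path_inD(2)[OF p1] .
  have pa: "path_in E S a x (ps @ [x])" using path_in_split(1)[of E S a b ps x "ms @ y # ss"] p1 by simp
  have pb: "path_in E S y b (y # ss)" using path_in_split(2)[of E S a b "ps @ x # ms" y ss] p1 by simp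
  have px: "path_in E S x y (x # ms @ [y])" using path_in_infix[OF p1] .
  have aP: "a \<in> set (ps @ [x])" using path_in_ends[OF pa] by simp
  have bQ: "b \<in> set (y # ss)" using path_in_ends[OF pb] by simp
  have i12: "set L1 \<inter> set L2 = {a, b}" using thetaD(5)[OF T] .
  have xyS: "x \<in> S" "y \<in> S" using path_inD(6)[OF p1] by auto
  have xy: "x \<noteq> y" using d1 by auto
  define X where "X = rev (ps @ [x])"
  define Z where "Z = rev (y # ss)"
  have pX: "path_in E S x a X" unfolding X_def using path_in_rev[OF sym pa] .
  have pZ: "path_in E S b y Z" unfolding Z_def using path_in_rev[OF sym pb] .
  have sX: "set X = set (ps @ [x])" unfolding X_def by simp
  have sZ: "set Z = set (y # ss)" unfolding Z_def by simp
  have XL2: "set X \<inter> set L2 \<subseteq> {a}"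
  proof -
    have "set X \<subseteq> set L1" unfolding sX L1 by auto
    moreover have "b \<notin> set X" using d1 bQ unfolding sX by auto
    ultimately show ?thesis using i12 by blast
  qed
  define G1 where "G1 = concat_path X L2"
  have pG1: "path_in E S x b G1" and sG1: "set G1 = set X \<union> set L2"
    and lG1: "length G1 = length X + length L2 - 1"
    using path_in_concat[OF pX p2 XL2] unfolding G1_def by auto
  have G1Z: "set G1 \<inter> set Z \<subseteq> {b}"
  proof -
    have "set X \<inter> set Z = {}" using d1 unfolding sX sZ by auto
    moreover have "set L2 \<inter> set Z \<subseteq> {a, b}" using i12 unfolding sZ L1 by auto
    moreover have "a \<notin> set Z" using d1 aP unfolding sZ by auto
    ultimately show ?thesis unfolding sG1 by blast
  qed
  define G where "G = concat_path G1 Z"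
  have pG: "path_in E S x y G" and sG: "set G = set G1 \<union> set Z"
    and lG: "length G = length G1 + length Z - 1"
    using path_in_concat[OF pG1 pZ G1Z] unfolding G_def by auto
  have sG': "set G = set ps \<union> {x} \<union> set L2 \<union> {y} \<union> set ss" unfolding sG sG1 sX sZ by auto
  have lG': "length G = length ps + length L2 + length ss"
    using lG lG1 path_inD(1)[OF p2] unfolding X_def Z_def by (cases L2) auto
  define M where "M = x # ms @ [y]"
  have sM: "set M \<inter> set G = {x, y}"
  proof -
    have "set ms \<inter> (set ps \<union> {x} \<union> {y} \<union> set ss) = {}" using d1 by auto
    moreover have "a \<notin> set ms" "b \<notin> set ms" using d1 aP bQ by auto
    moreover have "set ms \<inter> set L2 \<subseteq> {a, b}" using i12 unfolding L1 by auto
    ultimately have "set ms \<inter> set G = {}" unfolding sG' by blast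
    then show ?thesis unfolding M_def sG' by auto
  qed
  have l2: "2 \<le> length L2" using path_in_length[OF p2 ab] .
  have l3: "3 \<le> length L3" using le l2 thetaD(8)[OF T] by linarith
  have lG3: "3 \<le> length G"
  proof (rule ccontr)
    assume "\<not> ?thesis"
    then have "length L2 = 2" "length ps = 0" "length ss = 0" using lG' l2 by linarith+
    then have "length L2 = 2" "ps = []" "ss = []" by auto
    then have "L2 = [a, b]" "x = a" "y = b" using path_in_length2[OF p2] path_inD(4,5)[OF p1] by auto
    then show False using nl by simp
  qed
  have "theta E S r x y M [x, y] G"
  proof (rule thetaI)
    show "path_in E S x y M" unfolding M_def using px .
    show "path_in E S x y [x, y]" using path_in_edge[of E x y S] e xy xyS by blast
    show "set M \<inter> set [x, y] = {x, y}" unfolding M_def by auto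
    show "set [x, y] \<inter> set G = {x, y}" unfolding sG' by auto
    show "5 \<le> length [x, y] + length G" using lG3 by simp
    show "r \<in> set M" "r \<noteq> x" "r \<noteq> y" using rm d1 unfolding M_def by auto
    show "set M \<inter> set G = {x, y}" using sM .
  qed (use xy pG in auto)
  moreover have "length M + length [x, y] + length G < length L1 + length L2 + length L3"
    using lG' l3 unfolding M_def L1 by simp
  ultimately show ?thesis by (rule shorter_thetaI)
qed

lemma chord_within_root_path:
  assumes T: "theta E S r a b L1 L2 L3" and L1: "L1 = ps @ x # ms @ y # ss" and ms: "ms \<noteq> []"
    and e: "E x y" and nl2: "\<not> consecutive L2 x y" and nl3: "\<not> consecutive L3 x y"
  shows "shorter_theta (length L1 + length L2 + length L3)"
proof (cases "r \<in> set ms")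
  case False then show ?thesis using chord_within_root_path_avoiding[OF T L1 ms e] by blast
next
  case True
  show ?thesis
  proof (cases "length L2 \<le> length L3")
    case True
    then show ?thesis using chord_within_root_path_spanning[OF T L1 ms e \<open>r \<in> set ms\<close> nl2] by blast
  next
    case False
    then have "shorter_theta (length L1 + length L3 + length L2)"
      using chord_within_root_path_spanning[OF theta_swap[OF T] L1 ms e \<open>r \<in> set ms\<close> nl3] by simp
    then show ?thesis by (simp add: ac_simps)
  qed
qed

lemma diamond_from_four:
  assumes "distinct [a0, a1, a2, a3]" "a0 \<in> S" "a1 \<in> S" "a2 \<in> S" "a3 \<in> S"
    "E a0 a1" "E a0 a2" "E a0 a3" "E a1 a2" "E a1 a3" "\<not> E a2 a3"
  shows "has_induced_subdiv_diamond E S"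
proof -
  let ?W = "{a0, a1, a2, a3}"
  have "\<forall>u\<in>?W. \<forall>v\<in>?W. E u v \<longleftrightarrow> (u \<noteq> v \<and> \<not>((u = a2 \<and> v = a3) \<or> (u = a3 \<and> v = a2)))"
  proof (intro ballI)
    fix u v assume u: "u \<in> ?W" and v: "v \<in> ?W"
    have s: "E a1 a0" "E a2 a0" "E a3 a0" "E a2 a1" "E a3 a1" "\<not> E a3 a2"
      using assms(6-11) sym by blast+
    from u v show "E u v \<longleftrightarrow> (u \<noteq> v \<and> \<not>((u = a2 \<and> v = a3) \<or> (u = a3 \<and> v = a2)))"
      using assms(1,6-11) s irr by (elim insertE emptyE) (simp_all, blast+)
  qed
  then have "diamond_subdivision ?W E" by (rule diamond_subdivision_diamond[OF assms(1) refl])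
  then show ?thesis by (rule has_induced_subdiv_diamondI[rotated]) (use assms(2-5) in auto)
qed

lemma chord_between_arcs_long_tail:
  assumes T: "theta E S r a b L1 L2 L3" and L2: "L2 = p2 @ x # s2" and L3: "L3 = p3 @ y # s3"
    and ne: "p2 \<noteq> []" "s2 \<noteq> []" "p3 \<noteq> []" and s3: "2 \<le> length s3" and e: "E x y"
  shows "shorter_theta (length L1 + length L2 + length L3)"
proof -
  have p1: "path_in E S a b L1" and p2: "path_in E S a b L2" and p3: "path_in E S a b L3" and ab: "a \<noteq> b"
    using thetaD[OF T] by auto
  have i12: "set L1 \<inter> set L2 = {a, b}" and i13: "set L1 \<inter> set L3 = {a, b}"
    and i23: "set L2 \<inter> set L3 = {a, b}" using thetaD[OF T] by auto
  have rr: "r \<in> set L1" "r \<noteq> a" "r \<noteq> b" using thetaD[OF T] by auto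
  have d2: "distinct (p2 @ x # s2)" using path_inD(2)[OF p2] L2 by simp
  have d3: "distinct (p3 @ y # s3)" using path_inD(2)[OF p3] L3 by simp
  have hp2: "a \<in> set p2" using path_inD(4)[OF p2] ne L2 by (cases p2) auto
  have ls2: "b \<in> set s2" using path_in_last_in_suffix[of E S a b p2 x s2] p2 ne L2 by simp
  have hp3: "a \<in> set p3" using path_inD(4)[OF p3] ne L3 by (cases p3) auto
  have "s3 \<noteq> []" using s3 by auto
  then have ls3: "b \<in> set s3" using path_in_last_in_suffix[of E S a b p3 y s3] p3 L3 by simp
  have xa: "x \<noteq> a" "x \<noteq> b" using d2 hp2 ls2 by auto
  have ya: "y \<noteq> a" "y \<noteq> b" using d3 hp3 ls3 by auto
  have xL1: "x \<notin> set L1" using i12 xa L2 by auto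
  have xL3: "x \<notin> set L3" using i23 xa L2 by auto
  have yL2: "y \<notin> set L2" using i23 ya L3 by auto
  have pxs: "path_in E S x b (x # s2)" using path_in_split(2)[of E S a b p2 x s2] p2 L2 by simp
  have pp2: "path_in E S a x (p2 @ [x])" using path_in_split(1)[of E S a b p2 x s2] p2 L2 by simp
  have pp3: "path_in E S a y (p3 @ [y])" using path_in_split(1)[of E S a b p3 y s3] p3 L3 by simp
  have xS: "x \<in> S" using path_inD(6)[OF pxs] by simp
  define A where "A = concat_path (x # s2) (rev L1)"
  have gA: "set (x # s2) \<inter> set (rev L1) \<subseteq> {b}" using xL1 i12 d2 hp2 unfolding L2 by auto
  have pA: "path_in E S x a A" and sA: "set A = set (x # s2) \<union> set L1"
    and lA: "length A = length (x # s2) + length L1 - 1"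
    using path_in_concat[OF pxs path_in_rev[OF sym p1] gA] unfolding A_def by auto
  define B where "B = rev (p2 @ [x])"
  have pB: "path_in E S x a B" unfolding B_def by (rule path_in_rev[OF sym pp2])
  define C where "C = x # rev (p3 @ [y])"
  have pC: "path_in E S x a C" unfolding C_def
    by (rule path_in_Cons[OF path_in_rev[OF sym pp3] e _ xS]) (use xL3 L3 in auto)
  have sB: "set B = insert x (set p2)" unfolding B_def by auto
  have sC: "set C = insert x (insert y (set p3))" unfolding C_def by auto
  have iAB: "set A \<inter> set B = {x, a}"
  proof -
    have "set s2 \<inter> set p2 = {}" using d2 by auto
    moreover have "set L1 \<inter> set p2 \<subseteq> {a}" using i12 d2 ls2 unfolding L2 by auto
    moreover have "a \<in> set L1" using path_in_ends[OF p1] by simp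
    ultimately show ?thesis unfolding sA sB using hp2 xL1 by auto
  qed
  have iAC: "set A \<inter> set C = {x, a}"
  proof -
    have "set s2 \<inter> insert y (set p3) = {}"
    proof -
      have "set s2 \<inter> insert y (set p3) \<subseteq> {a, b}" using i23 unfolding L2 L3 by auto
      moreover have "a \<notin> set s2" using d2 hp2 by auto
      moreover have "b \<notin> insert y (set p3)" using d3 ls3 ya by auto
      ultimately show ?thesis by blast
    qed
    moreover have "set L1 \<inter> insert y (set p3) \<subseteq> {a}" using i13 d3 ls3 ya unfolding L3 by auto
    moreover have "a \<in> set L1" using path_in_ends[OF p1] by simp
    ultimately show ?thesis unfolding sA sC using hp3 xL1 by auto
  qed
  have iBC: "set B \<inter> set C = {x, a}"
  proof -
    have "set p2 \<inter> insert y (set p3) \<subseteq> {a, b}" using i23 unfolding L2 L3 by auto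
    moreover have "b \<notin> set p2" using d2 ls2 by auto
    ultimately show ?thesis unfolding sB sC using hp2 hp3 by auto
  qed
  have lB: "length B = length p2 + 1" unfolding B_def by simp
  have lC: "length C = length p3 + 2" unfolding C_def by simp
  have "theta E S r x a A B C"
  proof (rule thetaI[OF xa(1) pA pB pC iAB iAC iBC])
    show "5 \<le> length B + length C" using lB lC ne by (cases p2; cases p3; auto)
    show "r \<in> set A" "r \<noteq> x" "r \<noteq> a" using rr xL1 unfolding sA by auto
  qed
  moreover have "length A + length B + length C < length L1 + length L2 + length L3"
    using lA lB lC s3 path_inD(1)[OF p1] unfolding L2 L3 by (cases L1) auto
  ultimately show ?thesis by (rule shorter_thetaI)
qed

lemma chord_between_short_arcs:
  assumes T: "theta E S r a b L1 L2 L3" and L23: "L2 = [a, x, b]" "L3 = [a, y, b]" and e: "E x y"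
  shows "shorter_theta (length L1 + length L2 + length L3)"
proof -
  have p2: "path_in E S a b L2" and p3: "path_in E S a b L3" and ab: "a \<noteq> b"
    using thetaD[OF T] by auto
  have xy: "x \<noteq> a" "x \<noteq> b" "y \<noteq> a" "y \<noteq> b" "x \<noteq> y"
    using path_inD(2)[OF p2] path_inD(2)[OF p3] thetaD(7)[OF T] L23 by auto
  show ?thesis
  proof (cases "E a b")
    case True
    obtain ms where L1: "L1 = a # ms @ [b]" using path_in_decomp[OF thetaD(2)[OF T] ab] by blast
    have "ms \<noteq> []" using thetaD(9-11)[OF T] L1 by auto
    show ?thesis
      by (rule chord_within_root_path[OF T, of "[]" a ms b "[]"]) (use L1 \<open>ms \<noteq> []\<close> True L23 xy in auto)
  next
    case False
    have "a \<in> S" "b \<in> S" "x \<in> S" "y \<in> S" using path_inD(6)[OF p2] path_inD(6)[OF p3] L23 by auto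
    moreover have "E a x" "E x b" "E a y" "E y b" using path_inD(3)[OF p2] path_inD(3)[OF p3] L23 by auto
    ultimately have "has_induced_subdiv_diamond E S"
      by (intro diamond_from_four[of x y a b]) (use xy ab e False sym in auto)
    then show ?thesis unfolding shorter_theta_def by blast
  qed
qed

lemma chord_between_arcs:
  assumes T: "theta E S r a b L1 L2 L3" and x: "x \<in> set L2" "x \<noteq> a" "x \<noteq> b"
    and y: "y \<in> set L3" "y \<noteq> a" "y \<noteq> b" and e: "E x y"
  shows "shorter_theta (length L1 + length L2 + length L3)"
proof -
  obtain p2 s2 where L2: "L2 = p2 @ x # s2" "p2 \<noteq> []" "s2 \<noteq> []" "hd p2 = a" "last s2 = b"
    using path_in_split_interior[OF thetaD(3)[OF T] x] by blast
  obtain p3 s3 where L3: "L3 = p3 @ y # s3" "p3 \<noteq> []" "s3 \<noteq> []" "hd p3 = a" "last s3 = b"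
    using path_in_split_interior[OF thetaD(4)[OF T] y] by blast
  consider "2 \<le> length s3" | "2 \<le> length p3" | "2 \<le> length s2" | "2 \<le> length p2"
    | "length s3 < 2" "length p3 < 2" "length s2 < 2" "length p2 < 2" by linarith
  then show ?thesis
  proof cases
    case 1
    show ?thesis using chord_between_arcs_long_tail[OF T L2(1) L3(1) L2(2,3) L3(2) 1 e] .
  next
    case 2
    have "shorter_theta (length (rev L1) + length (rev L2) + length (rev L3))"
      by (rule chord_between_arcs_long_tail[OF theta_rev[OF T], of "rev s2" x "rev p2" "rev s3" y "rev p3"])
         (use L2 L3 2 e in auto)
    then show ?thesis by simp
  next
    case 3
    have "shorter_theta (length L1 + length L3 + length L2)"
      by (rule chord_between_arcs_long_tail[OF theta_swap[OF T] L3(1) L2(1) L3(2,3) L2(2) 3 sym[OF e]])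
    then show ?thesis by (simp add: ac_simps)
  next
    case 4
    have "shorter_theta (length (rev L1) + length (rev L3) + length (rev L2))"
      by (rule chord_between_arcs_long_tail[OF theta_rev[OF theta_swap[OF T]], of "rev s3" y "rev p3" "rev s2" x "rev p2"])
         (use L2 L3 4 sym[OF e] in auto)
    then show ?thesis by (simp add: ac_simps)
  next
    case 5
    then have "p2 = [a]" "s2 = [b]" "p3 = [a]" "s3 = [b]"
      using short_list_hd[of p2] short_list_last[of s2] short_list_hd[of p3] short_list_last[of s3] L2 L3
      by auto
    then show ?thesis using chord_between_short_arcs[OF T _ _ e] L2(1) L3(1) by simp
  qed
qed

end

locale cross_chord = root_of_degree_two +
  fixes a b :: 'a and L1 L2 L3 p1 s1 p2 s2 :: "'a list" and x y :: 'a
  assumes theta: "theta E S r a b L1 L2 L3"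
    and L1: "L1 = p1 @ x # s1" and L2: "L2 = p2 @ y # s2"
    and nonempty: "p1 \<noteq> []" "s1 \<noteq> []" "p2 \<noteq> []" "s2 \<noteq> []"
    and root_after_x: "r \<in> set s1" and chord: "E x y"
begin

lemma cross_chord_paths:
  shows "path_in E S a x (p1 @ [x])" "path_in E S x b (x # s1)"
    "path_in E S a y (p2 @ [y])" "path_in E S y b (y # s2)" "path_in E S a b L3"
  using path_in_split[of E S a b p1 x s1] path_in_split[of E S a b p2 y s2] thetaD(2-4)[OF theta] L1 L2
  by auto

lemma cross_chord_vertices:
  shows "x \<noteq> a" "x \<noteq> b" "y \<noteq> a" "y \<noteq> b" "x \<noteq> y" "x \<in> S" "y \<in> S" "r \<noteq> a" "r \<noteq> b"
    "a \<in> set p1" "b \<in> set s1" "a \<in> set p2" "b \<in> set s2" "a \<in> set L3" "b \<in> set L3"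
    "a \<notin> set s1" "b \<notin> set p1" "a \<notin> set s2" "b \<notin> set p2"
    "x \<notin> set L2" "x \<notin> set L3" "y \<notin> set L1" "y \<notin> set L3"
    "x \<notin> set p2" "x \<notin> set s2" "y \<notin> set p1" "y \<notin> set s1"
proof -
  have p1: "path_in E S a b L1" and p2: "path_in E S a b L2" and p3: "path_in E S a b L3"
    using thetaD[OF theta] by auto
  have d1: "distinct (p1 @ x # s1)" and d2: "distinct (p2 @ y # s2)"
    using path_inD(2)[OF p1] path_inD(2)[OF p2] L1 L2 by simp_all
  show ap1: "a \<in> set p1" and bs1: "b \<in> set s1"
    using path_in_hd_in_prefix[of E S a b p1 x s1] path_in_last_in_suffix[of E S a b p1 x s1] p1 nonempty L1 by simp_all
  show ap2: "a \<in> set p2" and bs2: "b \<in> set s2"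
    using path_in_hd_in_prefix[of E S a b p2 y s2] path_in_last_in_suffix[of E S a b p2 y s2] p2 nonempty L2 by simp_all
  show "a \<in> set L3" "b \<in> set L3" using path_in_ends[OF p3] by auto
  show xa: "x \<noteq> a" "x \<noteq> b" "a \<notin> set s1" "b \<notin> set p1" using d1 ap1 bs1 by auto
  show ya: "y \<noteq> a" "y \<noteq> b" "a \<notin> set s2" "b \<notin> set p2" using d2 ap2 bs2 by auto
  show "x \<notin> set L2" "x \<notin> set L3" "y \<notin> set L1" "y \<notin> set L3"
    using thetaD(5-7)[OF theta] xa ya L1 L2 by auto
  then show "x \<noteq> y" "x \<notin> set p2" "x \<notin> set s2" "y \<notin> set p1" "y \<notin> set s1"
    using L1 L2 by auto
  show "x \<in> S" "y \<in> S" using path_inD(6)[OF p1] path_inD(6)[OF p2] L1 L2 by auto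
  show "r \<noteq> a" "r \<noteq> b" using thetaD[OF theta] by auto
qed

lemma cross_chord_disjoint:
  shows "set s1 \<inter> set p1 = {}" "x \<notin> set s1" "x \<notin> set p1"
    "set s2 \<inter> set p2 = {}" "y \<notin> set s2" "y \<notin> set p2"
    "set s1 \<inter> set p2 = {}" "set s2 \<inter> set p1 = {}"
    "set p1 \<inter> set p2 = {a}" "set s1 \<inter> set s2 = {b}"
    "set p1 \<inter> set L3 = {a}" "set s1 \<inter> set L3 = {b}"
    "set p2 \<inter> set L3 = {a}" "set s2 \<inter> set L3 = {b}"
proof -
  have d1: "distinct (p1 @ x # s1)" and d2: "distinct (p2 @ y # s2)"
    using path_inD(2) thetaD(2,3)[OF theta] L1 L2 by metis+
  show "set s1 \<inter> set p1 = {}" "x \<notin> set s1" "x \<notin> set p1" using d1 by auto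
  show "set s2 \<inter> set p2 = {}" "y \<notin> set s2" "y \<notin> set p2" using d2 by auto
  have i: "set L1 \<inter> set L2 = {a, b}" "set L1 \<inter> set L3 = {a, b}" "set L2 \<inter> set L3 = {a, b}"
    using thetaD[OF theta] by auto
  note v = cross_chord_vertices
  show "set s1 \<inter> set p2 = {}" "set s2 \<inter> set p1 = {}" "set p1 \<inter> set p2 = {a}"
    "set s1 \<inter> set s2 = {b}" using i(1) v(10-13,16-19) unfolding L1 L2 by auto
  show "set p1 \<inter> set L3 = {a}" "set s1 \<inter> set L3 = {b}" using i(2) v(10,11,14-17) unfolding L1 by auto
  show "set p2 \<inter> set L3 = {a}" "set s2 \<inter> set L3 = {b}" using i(3) v(12-15,18,19) unfolding L2 by auto
qed

lemma cross_chord_lengths: "1 \<le> length p1" "1 \<le> length s1" "1 \<le> length p2" "1 \<le> length s2"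
  using nonempty by (auto simp: Suc_le_eq)

lemma cross_chord_long_L3:
  assumes "3 \<le> length L3"
  shows "shorter_theta (length L1 + length L2 + length L3)"
proof -
  note p = cross_chord_paths and v = cross_chord_vertices and d = cross_chord_disjoint
  define A where "A = concat_path (x # s1) (rev (y # s2))"
  have gA: "set (x # s1) \<inter> set (rev (y # s2)) \<subseteq> {b}" using d v by auto
  have pA: "path_in E S x y A" and sA: "set A = set (x # s1) \<union> set (y # s2)"
    and lA: "length A = length (x # s1) + length (y # s2) - 1"
    using path_in_concat[OF p(2) path_in_rev[OF sym p(4)] gA] unfolding A_def by auto
  define C where "C = concat_path (rev (p1 @ [x])) (p2 @ [y])"
  have gC: "set (rev (p1 @ [x])) \<inter> set (p2 @ [y]) \<subseteq> {a}" using d v by auto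
  have pC: "path_in E S x y C" and sC: "set C = set (p1 @ [x]) \<union> set (p2 @ [y])"
    and lC: "length C = length (p1 @ [x]) + length (p2 @ [y]) - 1"
    using path_in_concat[OF path_in_rev[OF sym p(1)] p(3) gC] unfolding C_def by auto
  have "theta E S r x y A [x, y] C"
  proof (rule thetaI[OF v(5) pA _ pC])
    show "path_in E S x y [x, y]" using path_in_edge[of E x y S] chord v by blast
    show "set A \<inter> set [x, y] = {x, y}" "set [x, y] \<inter> set C = {x, y}" unfolding sA sC by auto
    show "set A \<inter> set C = {x, y}" unfolding sA sC using d v by auto
    show "5 \<le> length [x, y] + length C" using lC cross_chord_lengths by simp
    show "r \<in> set A" "r \<noteq> x" "r \<noteq> y" using root_after_x d v L1 unfolding sA by auto
  qed
  moreover have "length A + length [x, y] + length C < length L1 + length L2 + length L3"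
    using lA lC L1 L2 assms by simp
  ultimately show ?thesis by (rule shorter_thetaI)
qed

lemma cross_chord_long_s2:
  assumes "2 \<le> length s2"
  shows "shorter_theta (length L1 + length L2 + length L3)"
proof -
  note p = cross_chord_paths and v = cross_chord_vertices and d = cross_chord_disjoint
  define A where "A = concat_path (x # s1) (rev L3)"
  have gA: "set (x # s1) \<inter> set (rev L3) \<subseteq> {b}" using d v by auto
  have pA: "path_in E S x a A" and sA: "set A = set (x # s1) \<union> set L3"
    and lA: "length A = length (x # s1) + length L3 - 1"
    using path_in_concat[OF p(2) path_in_rev[OF sym p(5)] gA] unfolding A_def by auto
  define B where "B = rev (p1 @ [x])"
  have pB: "path_in E S x a B" unfolding B_def by (rule path_in_rev[OF sym p(1)])
  define C where "C = x # rev (p2 @ [y])"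
  have pC: "path_in E S x a C" unfolding C_def
    by (rule path_in_Cons[OF path_in_rev[OF sym p(3)] chord]) (use v d in auto)
  have sB: "set B = insert x (set p1)" and sC: "set C = insert x (insert y (set p2))"
    unfolding B_def C_def by auto
  have "theta E S r x a A B C"
  proof (rule thetaI[OF v(1) pA pB pC])
    show "set A \<inter> set B = {x, a}" "set A \<inter> set C = {x, a}" "set B \<inter> set C = {x, a}"
      unfolding sA sB sC using d v by auto
    show "5 \<le> length B + length C"
      using cross_chord_lengths unfolding B_def C_def by simp
    show "r \<in> set A" "r \<noteq> x" "r \<noteq> a" using root_after_x d v unfolding sA by auto
  qed
  moreover have "length A + length B + length C < length L1 + length L2 + length L3"
    using lA L1 L2 assms cross_chord_lengths unfolding B_def C_def by simp
  ultimately show ?thesis by (rule shorter_thetaI)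
qed

lemma cross_chord_long_p2:
  assumes "2 \<le> length p2"
  shows "shorter_theta (length L1 + length L2 + length L3)"
proof -
  note p = cross_chord_paths and v = cross_chord_vertices and d = cross_chord_disjoint
  define B where "B = x # y # s2"
  have pB: "path_in E S x b B" unfolding B_def
    by (rule path_in_Cons[OF p(4) chord]) (use v d in auto)
  define C where "C = concat_path (rev (p1 @ [x])) L3"
  have gC: "set (rev (p1 @ [x])) \<inter> set L3 \<subseteq> {a}" using d v by auto
  have pC: "path_in E S x b C" and sC: "set C = set (p1 @ [x]) \<union> set L3"
    and lC: "length C = length (p1 @ [x]) + length L3 - 1"
    using path_in_concat[OF path_in_rev[OF sym p(1)] p(5) gC] unfolding C_def by auto
  have l3: "2 \<le> length L3" using path_in_length[OF p(5)] thetaD(1)[OF theta] .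
  have "theta E S r x b (x # s1) B C"
  proof (rule thetaI[OF v(2) p(2) pB pC])
    show "set (x # s1) \<inter> set B = {x, b}" "set (x # s1) \<inter> set C = {x, b}" "set B \<inter> set C = {x, b}"
      unfolding B_def sC using d v by auto
    show "5 \<le> length B + length C"
      using lC l3 cross_chord_lengths unfolding B_def by simp
    show "r \<in> set (x # s1)" "r \<noteq> x" "r \<noteq> b" using root_after_x d v by auto
  qed
  moreover have "length (x # s1) + length B + length C < length L1 + length L2 + length L3"
    using lC L1 L2 assms unfolding B_def by simp
  ultimately show ?thesis by (rule shorter_thetaI)
qed

lemma cross_chord_short_arcs_long_p1:
  assumes "L2 = [a, y, b]" "L3 = [a, b]" "2 \<le> length p1"
  shows "shorter_theta (length L1 + length L2 + length L3)"
proof -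
  note p = cross_chord_paths and v = cross_chord_vertices and d = cross_chord_disjoint
  have ya: "E a y" "E y b" using path_inD(3)[OF thetaD(3)[OF theta]] assms(1) by auto
  have pA: "path_in E S y b (y # x # s1)"
    by (rule path_in_Cons[OF p(2) sym[OF chord]]) (use v L1 in auto)
  have pB: "path_in E S y b [y, b]" using path_in_edge[of E y b S] ya v p(5) assms(2) path_inD(6) by force
  have pC: "path_in E S y b [y, a, b]"
    using path_in_Cons[OF p(5) sym[OF ya(1)]] v assms(2) by simp
  have "theta E S r y b (y # x # s1) [y, b] [y, a, b]"
  proof (rule thetaI[OF v(4) pA pB pC])
    show "set (y # x # s1) \<inter> set [y, b] = {y, b}" "set (y # x # s1) \<inter> set [y, a, b] = {y, b}"
      "set [y, b] \<inter> set [y, a, b] = {y, b}" using v by auto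
    show "5 \<le> length [y, b] + length [y, a, b]" by simp
    show "r \<in> set (y # x # s1)" "r \<noteq> y" "r \<noteq> b" using root_after_x v L1 by auto
  qed
  moreover have "length (y # x # s1) + length [y, b] + length [y, a, b] < length L1 + length L2 + length L3"
    using L1 assms by simp
  ultimately show ?thesis by (rule shorter_thetaI)
qed

lemma cross_chord_short_arcs_short_p1:
  assumes "L2 = [a, y, b]" "L3 = [a, b]" "p1 = [a]"
  shows "shorter_theta (length L1 + length L2 + length L3)"
proof -
  note p = cross_chord_paths and v = cross_chord_vertices
  have L1': "L1 = a # x # s1" using L1 assms(3) by simp
  have ya: "E a y" "E y b" using path_inD(3)[OF thetaD(3)[OF theta]] assms(1) by auto
  have eab: "E a b" and abS: "a \<in> S" "b \<in> S" using path_inD(3,6)[OF p(5)] assms(2) by auto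
  have eax: "E a x" using path_inD(3)[OF thetaD(2)[OF theta]] L1' by (auto simp: walk_Cons)
  show ?thesis
  proof (cases "E x b")
    case True
    have "last s1 = b" using path_inD(5)[OF thetaD(2)[OF theta]] L1 nonempty by simp
    then obtain ms where s1: "s1 = ms @ [b]" using nonempty(2) by (cases s1 rule: rev_cases) auto
    have "ms \<noteq> []" using root_after_x v s1 by auto
    moreover have "L1 = [a] @ x # ms @ b # []" using L1' s1 by simp
    moreover have "\<not> consecutive L2 x b" "\<not> consecutive L3 x b" using v consecutive_set by fastforce+
    ultimately show ?thesis using chord_within_root_path[OF theta] True by blast
  next
    case False
    have "has_induced_subdiv_diamond E S"
      by (rule diamond_from_four[of a y x b]) (use v abS ya eab eax chord False sym in auto)
    then show ?thesis unfolding shorter_theta_def by blast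
  qed
qed

lemma cross_chord_shorter_theta: "shorter_theta (length L1 + length L2 + length L3)"
proof -
  have p2: "path_in E S a b L2" and p3: "path_in E S a b L3" using thetaD[OF theta] by auto
  have l3: "2 \<le> length L3" using path_in_length[OF p3] thetaD(1)[OF theta] .
  show ?thesis
  proof (cases "3 \<le> length L3 \<or> 2 \<le> length s2 \<or> 2 \<le> length p2")
    case True
    then show ?thesis using cross_chord_long_L3 cross_chord_long_s2 cross_chord_long_p2 by blast
  next
    case False
    then have "L3 = [a, b]" "p2 = [a]" "s2 = [b]"
      using l3 path_in_length2[OF p3] short_list_hd[of p2] short_list_last[of s2] nonempty L2
        path_inD(4,5)[OF p2] by auto
    moreover have "p1 = [a] \<or> 2 \<le> length p1"
      using short_list_hd[of p1] nonempty path_inD(4)[OF thetaD(2)[OF theta]] L1 by fastforce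
    ultimately show ?thesis
      using cross_chord_short_arcs_long_p1 cross_chord_short_arcs_short_p1 L2 by auto
  qed
qed

end

context root_of_degree_two begin

lemma chord_root_path_arc_before_root:
  assumes "theta E S r a b L1 L2 L3" "L1 = p1 @ x # s1" "L2 = p2 @ y # s2"
    "p1 \<noteq> []" "s1 \<noteq> []" "p2 \<noteq> []" "s2 \<noteq> []" "r \<in> set s1" "E x y"
  shows "shorter_theta (length L1 + length L2 + length L3)"
  using cross_chord.cross_chord_shorter_theta
    [OF cross_chord.intro[OF root_of_degree_two_axioms cross_chord_axioms.intro[OF assms]]] .

lemma chord_root_path_arc:
  assumes T: "theta E S r a b L1 L2 L3" and x: "x \<in> set L1" "x \<noteq> a" "x \<noteq> b"
    and y: "y \<in> set L2" "y \<noteq> a" "y \<noteq> b" and e: "E x y"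
  shows "shorter_theta (length L1 + length L2 + length L3)"
proof -
  have p1: "path_in E S a b L1" and p2: "path_in E S a b L2" using thetaD[OF T] by auto
  have i12: "set L1 \<inter> set L2 = {a, b}" using thetaD[OF T] by auto
  have rL: "r \<in> set L1" using thetaD[OF T] by auto
  have xr: "x \<noteq> r"
  proof
    assume "x = r"
    then have "consecutive L1 r y" using root_chord_consecutive[OF T _ ] e y by auto
    then have "y \<in> set L1" using consecutive_set by fastforce
    then show False using i12 y by auto
  qed
  obtain p1 s1 where L1: "L1 = p1 @ x # s1" "p1 \<noteq> []" "s1 \<noteq> []"
    using path_in_split_interior[OF p1 x] by blast
  obtain p2 s2 where L2: "L2 = p2 @ y # s2" "p2 \<noteq> []" "s2 \<noteq> []"
    using path_in_split_interior[OF p2 y] by blast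
  have "r \<in> set p1 \<or> r \<in> set s1" using rL xr L1 by auto
  then show ?thesis
  proof
    assume "r \<in> set s1"
    then show ?thesis using chord_root_path_arc_before_root[OF T L1(1) L2(1) L1(2,3) L2(2,3) _ e] by blast
  next
    assume rp: "r \<in> set p1"
    have "shorter_theta (length (rev L1) + length (rev L2) + length (rev L3))"
      by (rule chord_root_path_arc_before_root[OF theta_rev[OF T], of "rev s1" x "rev p1" "rev s2" y "rev p2"])
         (use L1 L2 rp e in auto)
    then show ?thesis by simp
  qed
qed

lemma chord_shortens_theta:
  assumes T: "theta E S r a b L1 L2 L3" and u: "u \<in> set L1 \<union> set L2 \<union> set L3"
    and v: "v \<in> set L1 \<union> set L2 \<union> set L3" and e: "E u v"
    and n1: "\<not> consecutive L1 u v" and n2: "\<not> consecutive L2 u v" and n3: "\<not> consecutive L3 u v"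
  shows "shorter_theta (length L1 + length L2 + length L3)"
proof -
  have p1: "path_in E S a b L1" and p2: "path_in E S a b L2" and p3: "path_in E S a b L3" using thetaD[OF T] by auto
  have i: "set L1 \<inter> set L2 = {a, b}" "set L1 \<inter> set L3 = {a, b}" "set L2 \<inter> set L3 = {a, b}"
    using thetaD[OF T] by auto
  have ab: "a \<in> set L1" "b \<in> set L1" "a \<in> set L2" "b \<in> set L2" "a \<in> set L3" "b \<in> set L3"
    using path_in_ends[OF p1] path_in_ends[OF p2] path_in_ends[OF p3] by auto
  have uv: "u \<noteq> v" using e irr by auto
  have e': "E v u" using sym e .
  have n1': "\<not> consecutive L1 v u" "\<not> consecutive L2 v u" "\<not> consecutive L3 v u" using n1 n2 n3 consecutive_sym by metis+
  have T': "theta E S r a b L1 L3 L2" using theta_swap[OF T] .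
  have sw: "shorter_theta (length L1 + length L3 + length L2) \<Longrightarrow> shorter_theta (length L1 + length L2 + length L3)"
    by (simp add: ac_simps)
  show ?thesis
  proof (cases "u \<in> set L1 \<and> v \<in> set L1")
    case True
    obtain ps ms ss where ms: "ms \<noteq> []" and L: "L1 = ps @ u # ms @ v # ss \<or> L1 = ps @ v # ms @ u # ss"
      using nonconsecutive_split[OF path_inD(2)[OF p1] _ _ uv n1] True by blast
    then show ?thesis using chord_within_root_path[OF T _ ms e n2 n3] chord_within_root_path[OF T _ ms e' n1'(2,3)] by blast
  next
    case c1: False
    show ?thesis
    proof (cases "u \<in> set L2 \<and> v \<in> set L2")
      case True
      obtain ps ms ss where ms: "ms \<noteq> []" and L: "L2 = ps @ u # ms @ v # ss \<or> L2 = ps @ v # ms @ u # ss"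
        using nonconsecutive_split[OF path_inD(2)[OF p2] _ _ uv n2] True by blast
      then show ?thesis using chord_within_arc[OF T _ ms e n3] chord_within_arc[OF T _ ms e' n1'(3)] by blast
    next
      case c2: False
      show ?thesis
      proof (cases "u \<in> set L3 \<and> v \<in> set L3")
        case True
        obtain ps ms ss where ms: "ms \<noteq> []" and L: "L3 = ps @ u # ms @ v # ss \<or> L3 = ps @ v # ms @ u # ss"
          using nonconsecutive_split[OF path_inD(2)[OF p3] _ _ uv n3] True by blast
        then show ?thesis using chord_within_arc[OF T' _ ms e n2] chord_within_arc[OF T' _ ms e' n1'(2)] sw by blast
      next
        case c3: False
        have una: "u \<noteq> a" "u \<noteq> b" "v \<noteq> a" "v \<noteq> b" using c1 c2 c3 u v ab by auto
        consider (a12) "u \<in> set L1" "v \<in> set L2" | (a21) "u \<in> set L2" "v \<in> set L1"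
          | (a13) "u \<in> set L1" "v \<in> set L3" | (a31) "u \<in> set L3" "v \<in> set L1"
          | (a23) "u \<in> set L2" "v \<in> set L3" | (a32) "u \<in> set L3" "v \<in> set L2"
          using u v c1 c2 c3 by blast
        then show ?thesis
        proof cases
          case a12 then show ?thesis using chord_root_path_arc[OF T _ _ _ _ _ _ e] una by blast
        next
          case a21 then show ?thesis using chord_root_path_arc[OF T _ _ _ _ _ _ e'] una by blast
        next
          case a13 then show ?thesis using chord_root_path_arc[OF T' _ _ _ _ _ _ e] una sw by blast
        next
          case a31 then show ?thesis using chord_root_path_arc[OF T' _ _ _ _ _ _ e'] una sw by blast
        next
          case a23 then show ?thesis using chord_between_arcs[OF T _ _ _ _ _ _ e] una by blast
        next
          case a32 then show ?thesis using chord_between_arcs[OF T _ _ _ _ _ _ e'] una by blast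
        qed
      qed
    qed
  qed
qed

lemma chordless_theta_diamond:
  assumes T: "theta E S r a b L1 L2 L3"
    and nc: "\<forall>u\<in>set L1 \<union> set L2 \<union> set L3. \<forall>v\<in>set L1 \<union> set L2 \<union> set L3.
              E u v \<longrightarrow> consecutive L1 u v \<or> consecutive L2 u v \<or> consecutive L3 u v"
  shows "has_induced_subdiv_diamond E S"
proof -
  have p1: "path_in E S a b L1" and p2: "path_in E S a b L2" and p3: "path_in E S a b L3" and ab: "a \<noteq> b"
    using thetaD[OF T] by auto
  let ?W = "set L1 \<union> set L2 \<union> set L3"
  have l1: "length L1 \<noteq> 2"
  proof
    assume "length L1 = 2"
    then have "L1 = [a, b]" using path_in_length2[OF p1] by blast
    then show False using thetaD(9-11)[OF T] by auto
  qed
  have l23: "\<not>(length L2 = 2 \<and> length L3 = 2)" using thetaD(8)[OF T] by auto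
  have F: "\<forall>u\<in>?W. \<forall>v\<in>?W. E u v \<longleftrightarrow> consecutive L1 u v \<or> consecutive L2 u v \<or> consecutive L3 u v"
  proof (intro ballI iffI)
    fix u v assume "u \<in> ?W" "v \<in> ?W" "E u v"
    then show "consecutive L1 u v \<or> consecutive L2 u v \<or> consecutive L3 u v" using nc by blast
  next
    fix u v assume "consecutive L1 u v \<or> consecutive L2 u v \<or> consecutive L3 u v"
    then show "E u v" using walk_consecutive path_inD(3)[OF p1] path_inD(3)[OF p2] path_inD(3)[OF p3] sym by metis
  qed
  have "theta_graph ?W E a b L1 L2 L3"
    unfolding theta_graph_def
    using ab path_inD[OF p1] path_inD[OF p2] path_inD[OF p3] path_in_length[OF p1 ab] path_in_length[OF p2 ab] path_in_length[OF p3 ab]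
      thetaD(5-7)[OF T] l1 l23 F by blast
  then have "diamond_subdivision ?W E" by (rule theta_graph_diamond_subdivision)
  moreover have "?W \<subseteq> S" using path_inD(6)[OF p1] path_inD(6)[OF p2] path_inD(6)[OF p3] by auto
  ultimately show ?thesis using has_induced_subdiv_diamondI by blast
qed

lemma theta_has_diamond: "theta E S r a b L1 L2 L3 \<Longrightarrow> has_induced_subdiv_diamond E S"
proof (induction "length L1 + length L2 + length L3" arbitrary: a b L1 L2 L3 rule: less_induct)
  case less
  show ?case
  proof (cases "\<forall>u\<in>set L1 \<union> set L2 \<union> set L3. \<forall>v\<in>set L1 \<union> set L2 \<union> set L3.
              E u v \<longrightarrow> consecutive L1 u v \<or> consecutive L2 u v \<or> consecutive L3 u v")
    case True
    then show ?thesis using chordless_theta_diamond[OF less.prems] by blast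
  next
    case False
    then obtain u v where uv: "u \<in> set L1 \<union> set L2 \<union> set L3" "v \<in> set L1 \<union> set L2 \<union> set L3"
      "E u v" "\<not> consecutive L1 u v" "\<not> consecutive L2 u v" "\<not> consecutive L3 u v" by blast
    have "shorter_theta (length L1 + length L2 + length L3)" using chord_shortens_theta[OF less.prems uv] .
    then show ?thesis unfolding shorter_theta_def using less.hyps by blast
  qed
qed

end

lemma tutte_bridge_edge:
  assumes G: "sgraph V E" and H: "tutte_bridge V E A VH EH" and e: "EH x y"
  shows "E x y" "x \<in> VH" "y \<in> VH"
proof -
  obtain K where comp: "component (V - A) (induced_adj E (V - A)) K"
    and VH: "VH = K \<union> {a \<in> A. \<exists>k\<in>K. E a k}" and EH: "EH = (\<lambda>x y. E x y \<and> (x \<in> K \<or> y \<in> K))"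
    using H unfolding tutte_bridge_def by blast
  have sym: "\<And>x y. E x y \<Longrightarrow> E y x" and EV: "\<And>x y. E x y \<Longrightarrow> x \<in> V \<and> y \<in> V"
    using G unfolding sgraph_def by blast+
  have KV: "K \<subseteq> V - A" using comp unfolding component_def by blast
  have nbr: "w \<in> VH" if u: "u \<in> K" and eu: "E u w" for u w
  proof (cases "w \<in> A")
    case True
    then show ?thesis using u sym[OF eu] unfolding VH by blast
  next
    case False
    then have "w \<in> V - A" "induced_adj E (V - A) u w" using u eu KV EV[OF eu] unfolding induced_adj_def by auto
    then have "w \<in> K" using comp u unfolding component_def by blast
    then show ?thesis unfolding VH by blast
  qed
  show "E x y" using e unfolding EH by simp
  moreover have "x \<in> K \<or> y \<in> K" using e unfolding EH by simp
  ultimately show "x \<in> VH" "y \<in> VH" using nbr[of x y] nbr[of y x] sym unfolding VH by blast+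
qed

lemma tutte_bridge_no_attachment:
  assumes "tutte_bridge V E A VH EH" "a \<in> A" "a \<notin> VH" "w \<in> VH" "w \<notin> A"
  shows "\<not> E a w"
  using assms unfolding tutte_bridge_def by blast

lemma tutte_bridge_path:
  assumes G: "sgraph V E" and H: "tutte_bridge V E A VH EH"
    and P: "is_path EH P" "hd P \<in> VH"
  shows "path_in E VH (hd P) (last P) P"
proof -
  have "walk EH P" "P \<noteq> []" "distinct P" using P(1) unfolding is_path_iff by auto
  then show ?thesis using walk_set[of EH VH P] walk_mono[of EH E P] tutte_bridge_edge[OF G H] P(2)
    unfolding path_in_def by blast
qed

lemma tutte_bridge_cycle:
  assumes G: "sgraph V E" and H: "tutte_bridge V E A VH EH" and C: "is_cycle EH C"
  shows "closed_walk E C" "distinct C" "3 \<le> length C" "set C \<subseteq> VH"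
proof -
  have C': "3 \<le> length C" "distinct C" "\<And>k. Suc k < length C \<Longrightarrow> EH (C ! k) (C ! Suc k)"
    "EH (last C) (hd C)"
    using C unfolding is_cycle_def by auto
  have "walk EH C" "C \<noteq> []" using C'(1,3) unfolding walk_nth by auto
  then show "closed_walk E C" "set C \<subseteq> VH"
    using walk_mono[of EH E C] walk_set[of EH VH C] tutte_bridge_edge[OF G H] C'(4)
    unfolding closed_walk_def by blast+
  show "distinct C" "3 \<le> length C" using C' by auto
qed

lemma induced_path_segment:
  assumes Q: "induced_path E qs" and ij: "i \<le> j" "j < length qs"
  shows "path_in E {qs ! k |k. i \<le> k \<and> k \<le> j} (qs ! i) (qs ! j) (map ((!) qs) [i..<Suc j])"
    "set (map ((!) qs) [i..<Suc j]) = {qs ! k |k. i \<le> k \<and> k \<le> j}"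
proof -
  let ?R = "map ((!) qs) [i..<Suc j]"
  show setR: "set ?R = {qs ! k |k. i \<le> k \<and> k \<le> j}" by (auto simp: image_iff less_Suc_eq_le)
  have dq: "distinct qs" and eq: "\<And>k. Suc k < length qs \<Longrightarrow> E (qs ! k) (qs ! Suc k)"
    using Q unfolding induced_path_def is_path_def by auto
  have nR: "?R ! k = qs ! (i + k)" if "k < length ?R" for k using that by (simp del: upt_Suc)
  have "walk E ?R" unfolding walk_nth
  proof (intro allI impI)
    fix k assume k: "Suc k < length ?R"
    then have "Suc (i + k) < length qs" using ij by simp
    then show "E (?R ! k) (?R ! Suc k)" using nR k eq by simp
  qed
  moreover have "distinct ?R" using dq ij by (auto simp: distinct_map inj_on_def nth_eq_iff_index_eq)
  moreover have "hd ?R = qs ! i" using ij by (simp add: hd_map upt_rec)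
  moreover have "last ?R = qs ! j" using ij by (simp add: last_map)
  ultimately show "path_in E {qs ! k |k. i \<le> k \<and> k \<le> j} (qs ! i) (qs ! j) ?R"
    using ij unfolding path_in_def setR by simp
qed

lemma induced_path_neighbours:
  assumes Q: "induced_path E qs" and k: "Suc k < length qs" and w: "w \<in> set qs" "E (qs ! Suc k) w"
  shows "w = qs ! k \<or> w = qs ! Suc (Suc k)"
proof -
  obtain m where m: "m < length qs" "w = qs ! m" using w(1) by (auto simp: in_set_conv_nth)
  then have "Suc k = Suc m \<or> m = Suc (Suc k)" using Q k w(2) unfolding induced_path_def by blast
  then show ?thesis using m(2) by auto
qed

lemma root_of_degree_two_bridge:
  assumes G: "sgraph V E" and Q: "induced_path E qs" and H: "tutte_bridge V E (set qs) VH EH"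
    and k: "Suc k < length qs" "qs ! Suc k \<notin> VH" and S: "S \<subseteq> VH \<union> set qs"
  shows "root_of_degree_two E S (qs ! Suc k)"
proof -
  have nbrs: "w = qs ! k \<or> w = qs ! Suc (Suc k)" if "w \<in> S" "E (qs ! Suc k) w" for w
  proof (cases "w \<in> set qs")
    case True
    show ?thesis using induced_path_neighbours[OF Q k(1) True that(2)] .
  next
    case False
    then have "w \<in> VH" using that(1) S by blast
    then show ?thesis using tutte_bridge_no_attachment[OF H nth_mem[OF k(1)] k(2) _ False] that(2) by blast
  qed
  show ?thesis
  proof
    show "E y x" if "E x y" for x y using G that unfolding sgraph_def by blast
    show "\<not> E x x" for x using G unfolding sgraph_def by blast
    show "w1 = w2 \<or> w1 = w3 \<or> w2 = w3"
      if "w1 \<in> S" "w2 \<in> S" "w3 \<in> S" "E (qs ! Suc k) w1" "E (qs ! Suc k) w2" "E (qs ! Suc k) w3"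
      for w1 w2 w3
      using nbrs[OF that(1,4)] nbrs[OF that(2,5)] nbrs[OF that(3,6)] by metis
  qed
qed

lemma theta_of_cycle_with_handle:
  assumes sym: "\<And>x y. E x y \<Longrightarrow> E y x"
    and C: "closed_walk E C" "distinct C" "3 \<le> length C" "set C \<subseteq> S"
    and P1: "path_in E S v1 a P1" "set P1 \<inter> set C = {a}"
    and P2: "path_in E S v2 b P2" "set P2 \<inter> set C = {b}"
    and disj: "set P1 \<inter> set P2 = {}"
    and R: "path_in E S v1 v2 R" "set R \<inter> (set C \<union> set P1 \<union> set P2) \<subseteq> {v1, v2}"
    and r: "r \<in> set R" "r \<notin> set C"
  obtains L1 L2 L3 where "theta E S r a b L1 L2 L3"
proof -
  have aC: "a \<in> set C" "a \<in> set P1" and bC: "b \<in> set C" "b \<in> set P2" using P1(2) P2(2) by auto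
  have ab: "a \<noteq> b" using aC bC disj by auto
  obtain L2 L3 where L2: "path_in E (set C) a b L2" and L3: "path_in E (set C) a b L3"
    and L23: "set L2 \<inter> set L3 = {a, b}" "length L2 + length L3 = length C + 2"
    using closed_walk_arcs[OF sym C(1,2) aC(1) bC(1) ab] by blast
  have hd: "v1 \<in> set P1" "v2 \<in> set P2" using path_in_ends P1(1) P2(1) by fast+
  define G1 where "G1 = concat_path (rev P1) R"
  have pG1: "path_in E S a v2 G1" and sG1: "set G1 = set P1 \<union> set R"
    using path_in_concat[OF path_in_rev[OF sym P1(1)] R(1)] R(2) hd disj unfolding G1_def by auto
  define L1 where "L1 = concat_path G1 P2"
  have pL1: "path_in E S a b L1" and sL1: "set L1 = set P1 \<union> set R \<union> set P2"
    using path_in_concat[OF pG1 P2(1)] R(2) hd disj unfolding sG1 L1_def by auto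
  have L1C: "set L1 \<inter> set C = {a, b}" using P1(2) P2(2) R(2) hd unfolding sL1 by auto
  have sub: "set L2 \<subseteq> set C" "set L3 \<subseteq> set C" using L2 L3 by (auto dest: path_inD)
  have ends: "a \<in> set L2" "b \<in> set L2" "a \<in> set L3" "b \<in> set L3" using path_in_ends L2 L3 by fast+
  have "theta E S r a b L1 L2 L3"
  proof (rule thetaI[OF ab pL1])
    show "path_in E S a b L2" "path_in E S a b L3"
      using L2 L3 C(4) unfolding path_in_def by auto
    show "set L1 \<inter> set L2 = {a, b}" "set L1 \<inter> set L3 = {a, b}"
      using L1C sub ends by blast+
    show "set L2 \<inter> set L3 = {a, b}" "5 \<le> length L2 + length L3" using L23 C(3) by auto
    show "r \<in> set L1" "r \<noteq> a" "r \<noteq> b" using r aC bC unfolding sL1 by auto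
  qed
  then show thesis by (rule that)
qed

lemma bridge_diamond_ordered:
  assumes G: "sgraph V E"
    and Q: "set qs \<subseteq> V" "induced_path E qs"
    and H: "tutte_bridge V E (set qs) VH EH"
    and att: "VH \<inter> set qs = {v1, v2}" "\<not> E v1 v2"
    and cyc: "is_cycle EH C"
    and P1: "is_path EH P1" "hd P1 = v1" "set P1 \<inter> set C = {last P1}"
    and P2: "is_path EH P2" "hd P2 = v2" "set P2 \<inter> set C = {last P2}"
    and disj: "set P1 \<inter> set P2 = {}"
    and idx: "j < length qs" "qs ! i = v1" "qs ! j = v2" and ij: "i < j"
  shows "has_induced_subdiv_diamond E (VH \<union> {qs ! k | k. i \<le> k \<and> k \<le> j})"
proof -
  define R where "R = map ((!) qs) [i..<Suc j]"
  define S where "S = VH \<union> {qs ! k | k. i \<le> k \<and> k \<le> j}"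
  define r where "r = qs ! Suc i"
  have sym: "\<And>x y. E x y \<Longrightarrow> E y x" using G unfolding sgraph_def by blast
  have dq: "distinct qs" and eq: "\<And>k. Suc k < length qs \<Longrightarrow> E (qs ! k) (qs ! Suc k)"
    using Q(2) unfolding induced_path_def is_path_def by auto
  have ij2: "Suc i < j"
  proof (rule ccontr)
    assume "\<not> Suc i < j"
    then have "j = Suc i" using ij by simp
    then show False using eq[of i] idx att(2) by simp
  qed
  have seg: "path_in E {qs ! k | k. i \<le> k \<and> k \<le> j} v1 v2 R"
    and sR: "set R = {qs ! k | k. i \<le> k \<and> k \<le> j}"
    using induced_path_segment[OF Q(2), of i j] ij idx unfolding R_def by auto
  have pR: "path_in E S v1 v2 R" using path_in_mono[OF _ seg] unfolding S_def by blast
  have Rqs: "set R \<subseteq> set qs" using idx(1) unfolding sR by auto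
  have "r \<in> set R" unfolding sR r_def using ij2 by auto
  then have rR: "r \<in> set R" "r \<in> set qs" using Rqs by blast+
  have "r \<noteq> v1" "r \<noteq> v2"
    using dq idx ij2 unfolding r_def by (auto simp: nth_eq_iff_index_eq)
  then have rVH: "r \<notin> VH" using att(1) rR(2) by blast
  have "S \<subseteq> VH \<union> set qs" using Rqs unfolding S_def sR[symmetric] by blast
  then interpret root_of_degree_two E S r
    unfolding r_def using root_of_degree_two_bridge[OF G Q(2) H] ij2 idx(1) rVH r_def by simp
  have VHS: "VH \<subseteq> S" unfolding S_def by blast
  have v12: "v1 \<in> VH" "v2 \<in> VH" using att(1) by auto
  have P1VH: "path_in E VH v1 (last P1) P1" using tutte_bridge_path[OF G H P1(1)] P1(2) v12 by simp
  have P2VH: "path_in E VH v2 (last P2) P2" using tutte_bridge_path[OF G H P2(1)] P2(2) v12 by simp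
  note C = tutte_bridge_cycle[OF G H cyc]
  have "set R \<inter> (set C \<union> set P1 \<union> set P2) \<subseteq> {v1, v2}"
    using att(1) Rqs path_inD(6)[OF P1VH] path_inD(6)[OF P2VH] C(4) by blast
  moreover have "r \<notin> set C" using rVH C(4) by blast
  ultimately obtain L1 L2 L3 where "theta E S r (last P1) (last P2) L1 L2 L3"
    using theta_of_cycle_with_handle[OF sym C(1-3) order.trans[OF C(4) VHS]
        path_in_mono[OF VHS P1VH] P1(3) path_in_mono[OF VHS P2VH] P2(3) disj pR _ rR(1)]
    by blast
  then show ?thesis unfolding S_def[symmetric] by (rule theta_has_diamond)
qed

theorem mainTheorem18:
  fixes V :: "'a set" and E :: "'a \<Rightarrow> 'a \<Rightarrow> bool"
    and qs :: "'a list" and VH :: "'a set" and EH :: "'a \<Rightarrow> 'a \<Rightarrow> bool"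
    and v1 v2 :: 'a and C P1 P2 :: "'a list" and i j :: nat
  assumes G: "sgraph V E"
    and Q: "set qs \<subseteq> V" "induced_path E qs"
    and H: "tutte_bridge V E (set qs) VH EH"
    and att: "VH \<inter> set qs = {v1, v2}" "v1 \<noteq> v2" "\<not> E v1 v2"
    and cyc: "is_cycle EH C"
    and P1: "is_path EH P1" "hd P1 = v1" "set P1 \<inter> set C = {last P1}"
    and P2: "is_path EH P2" "hd P2 = v2" "set P2 \<inter> set C = {last P2}"
    and disj: "set P1 \<inter> set P2 = {}"
    and idx: "i < length qs" "j < length qs" "qs ! i = v1" "qs ! j = v2"
  shows "has_induced_subdiv_diamond E
           (VH \<union> {qs ! k | k. min i j \<le> k \<and> k \<le> max i j})"
proof -
  have "i \<noteq> j" using idx att(2) by auto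
  then consider "i < j" | "j < i" by linarith
  then show ?thesis
  proof cases
    case 1
    then show ?thesis using bridge_diamond_ordered[OF G Q H att(1,3) cyc P1 P2 disj idx(2-4)] by simp
  next
    case 2
    have "VH \<inter> set qs = {v2, v1}" "\<not> E v2 v1" using att G unfolding sgraph_def by auto
    moreover have "set P2 \<inter> set P1 = {}" using disj by auto
    moreover have "min i j = j" "max i j = i" using 2 by auto
    ultimately show ?thesis using bridge_diamond_ordered[OF G Q H _ _ cyc P2 P1 _ idx(1,4,3) 2] by simp
  qed
qed

end
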